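(* Let $\alpha_1,\dots,\alpha_N>0$, $A=\sum_{i=1}^N\frac1{\alpha_i}$, and $c(x_1,\dots,x_N)=\sum_{j=1}^nx_{1,j}^{1/\alpha_1}\cdots x_{N,j}^{1/\alpha_N}$ for $x_i\in\mathbb{R}_+^n=(0,\infty)^n$. Let $f_i:\mathbb{R}_+^n\to[0,\infty)$ and $\rho:(0,\infty)\to[0,\infty)$ be Borel functions with $\prod_{i=1}^Nf_i(x_i)^{1/\alpha_i}\le\rho(c(x))$ for all $x_1,\dots,x_N\in\mathbb{R}^n_+$. Let $m=e^{-V}dx$ on $\mathbb{R}_+^n$, where $V:\mathbb{R}_+^n\to(-\infty,\infty]$ is such that $(t_1,\dots,t_n)\mapsto V(e^{t_1},\dots,e^{t_n})$ is convex on $\mathbb{R}^n$. Then $$\prod_{i=1}^N\Bigl(\int_{\mathbb{R}_+^n}f_i\,dm\Bigr)^{1/\alpha_i}\le\Bigl(\int_{\mathbb{R}^n_+}\rho^{1/A}\Bigl(\sum_{j=1}^nt_j^A\Bigr)m(dt)\Bigr)^A.$$ In particular, if $V_i:\mathbb{R}^n_+\to(-\infty,\infty]$ satisfy $\sum_iV_i(x_i)\ge c(x)$ for all $x$, then $$\prod_{i=1}^N\Bigl(\int_{\mathbb{R}^n_+}e^{-\alpha_iV_i}dm\Bigr)^{1/\alpha_i}\le\Bigl(\int_{\mathbb{R}^n_+}e^{-\frac1A\sum_{j=1}^nt_j^A}m(dt)\Bigr)^A.$$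
   Context: For $x_i\in\mathbb{R}^n$ write $x_i=(x_{i,1},\dots,x_{i,n})$. *)

theory Defs
  imports "HOL-Analysis.Analysis"
begin

definition pos_orthant :: "(real ^ 'n) set" where
  "pos_orthant = {x. \<forall>j. 0 < x $ j}"

definition cost :: "nat \<Rightarrow> (nat \<Rightarrow> real) \<Rightarrow> (nat \<Rightarrow> real ^ 'n) \<Rightarrow> real" where
  "cost N \<alpha> x = (\<Sum>j\<in>UNIV. \<Prod>i<N. (x i $ j) powr (1 / \<alpha> i))"

definition emexp :: "ereal \<Rightarrow> ennreal" where
  "emexp v = (if v = \<infinity> then 0 else if v = -\<infinity> then \<infinity> else ennreal (exp (- real_of_ereal v)))"

definition epowr :: "ennreal \<Rightarrow> real \<Rightarrow> ennreal" (infixr "epowr" 80) where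
  "a epowr p = (if a = \<infinity> then \<infinity> else ennreal (enn2real a powr p))"

definition ereal_convex_on :: "'a::real_vector set \<Rightarrow> ('a \<Rightarrow> ereal) \<Rightarrow> bool" where
  "ereal_convex_on S g \<longleftrightarrow> (\<forall>s\<in>S. \<forall>t\<in>S. \<forall>u::real. 0 < u \<and> u < 1 \<longrightarrow>
      g (u *\<^sub>R s + (1 - u) *\<^sub>R t) \<le> ereal u * g s + ereal (1 - u) * g t)"

definition meas_V :: "(real ^ 'n \<Rightarrow> ereal) \<Rightarrow> (real ^ 'n) measure" where
  "meas_V V = density lebesgue (\<lambda>x. indicator pos_orthant x * emexp (V x))"

end

theory Submission
  imports Defs
begin

text \<open>
  With the weights l_i = 1 / (\<alpha>_i A), which sum to 1, the componentwise weighted geometric mean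
  z of x_1, ..., x_N satisfies \<Sum>_j z_j^A = c(x). In the coordinates t = log x the point z is a
  convex combination of the log x_i, so convexity of t \<mapsto> V(e^t) gives
  e^-V(z) \<ge> \<Prod>_i e^-(l_i V(x_i)). Hence F_i = f_i e^-V and H(t) = \<rho>(\<Sum>_j t_j^A)^(1/A) e^-V(t)
  satisfy \<Prod>_i F_i(x_i)^l_i \<le> H(z), and the theorem is the multiplicative Prekopa-Leindler
  inequality \<Prod>_i (\<integral>F_i)^l_i \<le> \<integral>H on (0,\<infinity>)^n, raised to the power A.

  That inequality reduces by Tonelli's theorem to a single coordinate, and by the substitution
  y = e^s to the one-dimensional Prekopa-Leindler inequality \<Prod>_i (\<integral>G_i)^l_i \<le> \<integral>H for
  \<Prod>_i G_i(s_i)^l_i \<le> H(\<Sum>_i l_i s_i). After normalizing sup G_i = 1, the superlevel sets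
  {G_i > t} for t < 1 are nonempty and their Minkowski combination lies in {H > t}, so the
  one-dimensional Brunn-Minkowski inequality |\<Sum>_i l_i K_i| \<ge> \<Sum>_i l_i |K_i|, integrated over t
  (layer-cake formula), gives \<Sum>_i l_i \<integral>G_i \<le> \<integral>H; the weighted AM-GM inequality finishes.

  The second statement is the special case f_i = e^-(\<alpha>_i W_i) and \<rho>(s) = e^-s.
\<close>

section \<open>Powers of extended nonnegative reals\<close>

lemma epowr_top [simp]: "top epowr p = top"
  by (simp add: epowr_def)

lemma epowr_ennreal [simp]: "0 \<le> r \<Longrightarrow> ennreal r epowr p = ennreal (r powr p)"
  by (simp add: epowr_def)

lemma epowr_0 [simp]: "0 epowr p = 0"
  by (simp add: epowr_def)

lemma epowr_1 [simp]: "a epowr 1 = a"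
  by (cases a) auto

lemma epowr_eq_0_iff: "a epowr p = 0 \<longleftrightarrow> a = 0"
  by (cases a) auto

lemma epowr_mono:
  assumes "a \<le> b" "0 \<le> p"
  shows "a epowr p \<le> b epowr p"
proof (cases b)
  case (real s)
  with assms obtain r where "a = ennreal r" "0 \<le> r" "r \<le> s"
    by (cases a) (auto simp: top_unique)
  with real assms show ?thesis
    by (auto intro!: ennreal_leI powr_mono2)
qed simp

lemma epowr_mult: "(a * b) epowr p = a epowr p * b epowr p"
proof (cases a; cases b)
  fix r s assume "0 \<le> r" "a = ennreal r" "0 \<le> s" "b = ennreal s"
  then show ?thesis by (simp add: ennreal_mult[symmetric] powr_mult)
qed (auto simp: ennreal_mult_top ennreal_top_mult epowr_eq_0_iff)

lemma epowr_epowr: "(a epowr p) epowr q = a epowr (p * q)"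
  by (cases a) (auto simp: powr_powr)

lemma prod_epowr_distrib: "(\<Prod>i\<in>S. f i) epowr p = (\<Prod>i\<in>S. f i epowr p)"
proof (induction S rule: infinite_finite_induct)
  case (insert x F)
  then show ?case by (simp add: epowr_mult)
qed (auto simp: epowr_def)

lemma prod_epowr_mono:
  "(\<And>i. i \<in> S \<Longrightarrow> a i \<le> b i) \<Longrightarrow> (\<And>i. i \<in> S \<Longrightarrow> 0 \<le> l i) \<Longrightarrow>
    (\<Prod>i\<in>S. a i epowr l i) \<le> (\<Prod>i\<in>S. b i epowr l i)"
  by (intro prod_mono_ennreal epowr_mono)

lemma prod_ennreal_mult_epowr:
  assumes "\<And>i. i \<in> S \<Longrightarrow> 0 \<le> d i"
  shows "(\<Prod>i\<in>S. (ennreal (d i) * x i) epowr l i) = ennreal (\<Prod>i\<in>S. d i powr l i) * (\<Prod>i\<in>S. x i epowr l i)"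
proof -
  have "(\<Prod>i\<in>S. (ennreal (d i) * x i) epowr l i) = (\<Prod>i\<in>S. ennreal (d i powr l i) * x i epowr l i)"
    using assms by (intro prod.cong refl) (simp add: epowr_mult)
  also have "\<dots> = ennreal (\<Prod>i\<in>S. d i powr l i) * (\<Prod>i\<in>S. x i epowr l i)"
    by (simp add: prod.distrib prod_ennreal)
  finally show ?thesis .
qed

lemma epowr_sum:
  assumes "finite S" "S \<noteq> {}" "\<And>i. i \<in> S \<Longrightarrow> 0 < l i"
  shows "a epowr (\<Sum>i\<in>S. l i) = (\<Prod>i\<in>S. a epowr l i)"
  using assms
proof (induction S rule: finite_ne_induct)
  case (insert x F)
  then have "0 < sum l F"
    by (intro sum_pos) auto
  with insert show ?case
    by (cases a) (auto simp: powr_add ennreal_mult)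
qed simp

lemma Min_le_prod_epowr:
  fixes x :: "'i \<Rightarrow> ennreal"
  assumes "finite S" "S \<noteq> {}" "\<And>i. i \<in> S \<Longrightarrow> 0 < l i" "(\<Sum>i\<in>S. l i) = 1"
  shows "Min (x ` S) \<le> (\<Prod>i\<in>S. x i epowr l i)"
proof -
  have "Min (x ` S) = (\<Prod>i\<in>S. Min (x ` S) epowr l i)"
    using assms by (metis epowr_1 epowr_sum)
  also have "\<dots> \<le> (\<Prod>i\<in>S. x i epowr l i)"
    using assms by (intro prod_epowr_mono) (auto intro: less_imp_le)
  finally show ?thesis .
qed

text \<open>For \<open>p > 0\<close>, \<open>a \<mapsto> a epowr p\<close> is an order automorphism of \<open>[0,\<infinity>]\<close> with inverse
  \<open>a \<mapsto> a epowr (1/p)\<close>, hence it commutes with suprema.\<close>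
lemma epowr_SUP:
  assumes p: "0 < p"
  shows "(SUP i\<in>I. a i) epowr p = (SUP i\<in>I. a i epowr p)"
proof (rule antisym)
  have "a i \<le> (SUP i\<in>I. a i epowr p) epowr (1 / p)" if "i \<in> I" for i
  proof -
    have "a i = (a i epowr p) epowr (1 / p)"
      using p by (simp add: epowr_epowr)
    also have "\<dots> \<le> (SUP i\<in>I. a i epowr p) epowr (1 / p)"
      using p that by (intro epowr_mono SUP_upper) auto
    finally show ?thesis .
  qed
  then have "(SUP i\<in>I. a i) epowr p \<le> ((SUP i\<in>I. a i epowr p) epowr (1 / p)) epowr p"
    using p by (intro epowr_mono SUP_least) auto
  then show "(SUP i\<in>I. a i) epowr p \<le> (SUP i\<in>I. a i epowr p)"
    using p by (simp add: epowr_epowr)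
qed (use p in \<open>intro SUP_least epowr_mono SUP_upper, auto\<close>)

lemma weighted_geometric_mean_le_arithmetic_mean:
  fixes x l :: "'i \<Rightarrow> real"
  assumes S: "finite S" "S \<noteq> {}" and x: "\<And>i. i \<in> S \<Longrightarrow> 0 \<le> x i"
    and l: "\<And>i. i \<in> S \<Longrightarrow> 0 < l i" and l1: "(\<Sum>i\<in>S. l i) = 1"
  shows "(\<Prod>i\<in>S. x i powr l i) \<le> (\<Sum>i\<in>S. l i * x i)"
proof (cases "\<exists>i\<in>S. x i = 0")
  case True
  then have "(\<Prod>i\<in>S. x i powr l i) = 0"
    using S by (auto intro: prod_zero)
  then show ?thesis
    using x l by (simp add: sum_nonneg less_imp_le)
next
  case False
  with x have x_pos: "0 < x i" if "i \<in> S" for i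
    using that by force
  have "(\<Prod>i\<in>S. x i powr l i) = (\<Prod>i\<in>S. exp (l i * ln (x i)))"
    by (intro prod.cong) (auto simp: powr_def dest: x_pos)
  also have "\<dots> = exp (\<Sum>i\<in>S. l i *\<^sub>R ln (x i))"
    using S by (simp add: exp_sum)
  also have "\<dots> \<le> (\<Sum>i\<in>S. l i * exp (ln (x i)))"
    by (intro convex_on_sum[OF S exp_convex l1]) (auto intro: less_imp_le[OF l])
  also have "\<dots> = (\<Sum>i\<in>S. l i * x i)"
    using x_pos by simp
  finally show ?thesis .
qed

lemma weighted_geometric_mean_le_arithmetic_mean_ennreal:
  fixes x :: "'i \<Rightarrow> ennreal" and l :: "'i \<Rightarrow> real"
  assumes S: "finite S" "S \<noteq> {}" and l: "\<And>i. i \<in> S \<Longrightarrow> 0 < l i" and l1: "(\<Sum>i\<in>S. l i) = 1"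
  shows "(\<Prod>i\<in>S. x i epowr l i) \<le> (\<Sum>i\<in>S. ennreal (l i) * x i)"
proof (cases "\<exists>i\<in>S. x i = top")
  case True
  then obtain j where j: "j \<in> S" "x j = top" by auto
  have "top = ennreal (l j) * x j"
    using j l[OF j(1)] by (simp add: ennreal_mult_top)
  also have "\<dots> \<le> (\<Sum>i\<in>S. ennreal (l i) * x i)"
    using j S by (intro member_le_sum) auto
  finally show ?thesis by (simp add: top_unique)
next
  case False
  define r where "r i = enn2real (x i)" for i
  have x: "x i = ennreal (r i)" if "i \<in> S" for i
    using False that by (auto simp: r_def less_top)
  have "(\<Prod>i\<in>S. x i epowr l i) = (\<Prod>i\<in>S. ennreal (r i powr l i))"
    using x by (intro prod.cong refl) (metis enn2real_nonneg epowr_ennreal r_def)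
  also have "\<dots> = ennreal (\<Prod>i\<in>S. r i powr l i)"
    by (simp add: prod_ennreal)
  also have "\<dots> \<le> ennreal (\<Sum>i\<in>S. l i * r i)"
    using S l l1 by (intro ennreal_leI weighted_geometric_mean_le_arithmetic_mean) (auto simp: r_def)
  also have "\<dots> = (\<Sum>i\<in>S. ennreal (l i) * ennreal (r i))"
    using l by (subst sum_ennreal[symmetric]) (auto simp: r_def ennreal_mult less_imp_le)
  also have "\<dots> = (\<Sum>i\<in>S. ennreal (l i) * x i)"
    using x by simp
  finally show ?thesis .
qed

lemma SUP_mult_incseq_ennreal:
  fixes a b :: "nat \<Rightarrow> ennreal"
  assumes a: "incseq a" and b: "incseq b"
  shows "(SUP k. a k * b k) = (SUP k. a k) * (SUP k. b k)"
proof (rule antisym)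
  have "(SUP k. a k) * (SUP k. b k) = (SUP i. SUP j. a i * b j)"
    by (simp add: SUP_mult_left_ennreal SUP_mult_right_ennreal) (rule SUP_commute)
  also have "\<dots> \<le> (SUP k. a k * b k)"
  proof (intro SUP_least)
    fix i j
    have "a i * b j \<le> a (max i j) * b (max i j)"
      using a b by (intro mult_mono) (auto simp: incseq_def)
    also have "\<dots> \<le> (SUP k. a k * b k)" by (rule SUP_upper) auto
    finally show "a i * b j \<le> (SUP k. a k * b k)" .
  qed
  finally show "(SUP k. a k) * (SUP k. b k) \<le> (SUP k. a k * b k)" .
qed (intro SUP_least mult_mono SUP_upper, auto)

lemma SUP_prod_incseq_ennreal:
  fixes f :: "'i \<Rightarrow> nat \<Rightarrow> ennreal"
  assumes "finite S" "\<And>i. i \<in> S \<Longrightarrow> incseq (f i)"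
  shows "(SUP k. \<Prod>i\<in>S. f i k) = (\<Prod>i\<in>S. SUP k. f i k)"
  using assms
proof (induction S rule: finite_induct)
  case (insert x F)
  have "incseq (\<lambda>k. \<Prod>i\<in>F. f i k)"
    using insert by (auto simp: incseq_def intro!: prod_mono_ennreal)
  with insert show ?case
    by (simp add: SUP_mult_incseq_ennreal)
qed simp

lemma SUP_min_of_nat_Suc_ennreal: "(SUP k. min x (of_nat (Suc k))) = (x :: ennreal)"
proof -
  have "top = (SUP k. of_nat k :: ennreal)"
    by (simp add: ennreal_SUP_of_nat_eq_top)
  also have "\<dots> \<le> (SUP k. of_nat (Suc k))"
  proof (rule SUP_mono)
    fix n :: nat
    show "\<exists>m\<in>UNIV. of_nat n \<le> (of_nat (Suc m) :: ennreal)"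
      by (intro bexI[of _ n]) auto
  qed
  finally have top: "(SUP k. of_nat (Suc k) :: ennreal) = top"
    by (simp add: top_unique)
  have "(SUP k. min x (of_nat (Suc k))) = min x (SUP k. of_nat (Suc k))"
    using inf_SUP[of x "\<lambda>k. of_nat (Suc k)" UNIV] by (simp only: inf_min)
  then show ?thesis
    by (simp only: top min_top2)
qed

section \<open>The Brunn-Minkowski inequality on the real line\<close>

definition minkowski_combination :: "nat \<Rightarrow> (nat \<Rightarrow> real) \<Rightarrow> (nat \<Rightarrow> real set) \<Rightarrow> real set" where
  "minkowski_combination N l K = {\<Sum>i<N. l i * a i | a. \<forall>i<N. a i \<in> K i}"

lemma minkowski_combination_0 [simp]: "minkowski_combination 0 l K = {0}"
  by (simp add: minkowski_combination_def)

lemma minkowski_combination_Suc: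
  "minkowski_combination (Suc N) l K =
    {x + l N * y | x y. x \<in> minkowski_combination N l K \<and> y \<in> K N}"
proof (intro set_eqI iffI)
  fix z assume "z \<in> minkowski_combination (Suc N) l K"
  then show "z \<in> {x + l N * y | x y. x \<in> minkowski_combination N l K \<and> y \<in> K N}"
    unfolding minkowski_combination_def by fastforce
next
  fix z assume "z \<in> {x + l N * y | x y. x \<in> minkowski_combination N l K \<and> y \<in> K N}"
  then obtain a y where z: "z = (\<Sum>i<N. l i * a i) + l N * y" and a: "\<forall>i<N. a i \<in> K i" "y \<in> K N"
    unfolding minkowski_combination_def by auto
  have "z = (\<Sum>i<Suc N. l i * (a(N := y)) i)"
    using z by simp
  moreover have "\<forall>i<Suc N. (a(N := y)) i \<in> K i"
    using a by (auto simp: less_Suc_eq)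
  ultimately show "z \<in> minkowski_combination (Suc N) l K"
    unfolding minkowski_combination_def by blast
qed

lemma minkowski_combination_mono:
  "(\<And>i. i < N \<Longrightarrow> K i \<subseteq> A i) \<Longrightarrow> minkowski_combination N l K \<subseteq> minkowski_combination N l A"
  unfolding minkowski_combination_def by blast

lemma compact_plus_scaled:
  fixes X Y :: "real set"
  assumes "compact X" "compact Y"
  shows "compact {x + c * y | x y. x \<in> X \<and> y \<in> Y}"
proof -
  have "{x + c * y | x y. x \<in> X \<and> y \<in> Y} = {x + y | x y. x \<in> X \<and> y \<in> (*\<^sub>R) c ` Y}"
    by auto
  then show ?thesis
    using assms compact_scaling[of Y c] by (simp add: compact_sums)
qed

lemma compact_minkowski_combination:
  "(\<And>i. i < N \<Longrightarrow> compact (K i)) \<Longrightarrow> compact (minkowski_combination N l K)"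
  by (induction N) (auto simp: minkowski_combination_Suc intro: compact_plus_scaled)

lemma minkowski_combination_nonempty:
  "(\<And>i. i < N \<Longrightarrow> K i \<noteq> {}) \<Longrightarrow> minkowski_combination N l K \<noteq> {}"
  by (induction N) (auto simp: minkowski_combination_Suc)

lemma emeasure_lborel_affine_image_compact:
  fixes S :: "real set"
  assumes "compact S"
  shows "emeasure lborel ((\<lambda>x. c * x + a) ` S) = ennreal \<bar>c\<bar> * emeasure lborel S"
proof -
  have "compact ((\<lambda>x. c * x + a) ` S)"
    using assms by (intro compact_continuous_image continuous_intros)
  then show ?thesis
    using assms emeasure_lebesgue_affine[of c a S] by (simp add: borel_compact)
qed

text \<open>The translates \<open>X + c b\<close> and \<open>a + c Y\<close>, with \<open>a = max X\<close> and \<open>b = min Y\<close>, lie in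
  \<open>X + c Y\<close> and overlap only in the point \<open>a + c b\<close>.\<close>
lemma brunn_minkowski_compact_real:
  fixes X Y :: "real set"
  assumes X: "compact X" "X \<noteq> {}" and Y: "compact Y" "Y \<noteq> {}" and c: "0 < c"
  shows "emeasure lborel X + ennreal c * emeasure lborel Y
           \<le> emeasure lborel {x + c * y | x y. x \<in> X \<and> y \<in> Y}"
proof -
  define a where "a = Sup X"
  define b where "b = Inf Y"
  have a: "a \<in> X" "\<And>x. x \<in> X \<Longrightarrow> x \<le> a"
    unfolding a_def using X by (auto intro!: closed_contains_Sup cSup_upper compact_imp_bounded
        compact_imp_closed bounded_imp_bdd_above)
  have b: "b \<in> Y" "\<And>y. y \<in> Y \<Longrightarrow> b \<le> y"
    unfolding b_def using Y by (auto intro!: closed_contains_Inf cInf_lower compact_imp_bounded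
        compact_imp_closed bounded_imp_bdd_below)
  define X' where "X' = (\<lambda>x. x + c * b) ` X"
  define Y' where "Y' = (\<lambda>y. c * y + a) ` Y"
  have borel: "X' \<in> sets borel" "Y' \<in> sets borel"
    unfolding X'_def Y'_def using X Y
    by (auto intro!: borel_compact compact_continuous_image continuous_intros)
  have "X' \<inter> Y' \<subseteq> {a + c * b}"
  proof
    fix z assume "z \<in> X' \<inter> Y'"
    then obtain x y where "x \<in> X" "y \<in> Y" "z = x + c * b" "z = c * y + a"
      by (auto simp: X'_def Y'_def)
    moreover from this have "c * b \<le> c * y"
      using b c by (simp add: mult_left_mono)
    moreover have "x \<le> a"
      using a \<open>x \<in> X\<close> by simp
    ultimately show "z \<in> {a + c * b}"
      by simp
  qed
  then have "X' \<inter> Y' \<in> null_sets lborel"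
    using borel emeasure_mono[of "X' \<inter> Y'" "{a + c * b}" lborel] by (auto intro: null_setsI)
  then have "emeasure lborel X + ennreal c * emeasure lborel Y = emeasure lborel (X' \<union> Y')"
    using borel c emeasure_lborel_affine_image_compact[OF X(1), of 1 "c * b"]
      emeasure_lborel_affine_image_compact[OF Y(1), of c a]
    by (simp add: emeasure_Un' X'_def Y'_def)
  also have "\<dots> \<le> emeasure lborel {x + c * y | x y. x \<in> X \<and> y \<in> Y}"
    using a(1) b(1) X Y
    by (intro emeasure_mono) (auto simp: X'_def Y'_def borel_compact compact_plus_scaled add.commute)
  finally show ?thesis .
qed

lemma brunn_minkowski_compact_real_sum:
  assumes "\<And>i. i < N \<Longrightarrow> compact (K i) \<and> K i \<noteq> {}" and "\<And>i. i < N \<Longrightarrow> 0 < l i"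
  shows "(\<Sum>i<N. ennreal (l i) * emeasure lborel (K i)) \<le> emeasure lborel (minkowski_combination N l K)"
  using assms
proof (induction N)
  case (Suc N)
  have "(\<Sum>i<Suc N. ennreal (l i) * emeasure lborel (K i))
      \<le> emeasure lborel (minkowski_combination N l K) + ennreal (l N) * emeasure lborel (K N)"
    using Suc by (simp add: add_right_mono)
  also have "\<dots> \<le> emeasure lborel (minkowski_combination (Suc N) l K)"
    unfolding minkowski_combination_Suc using Suc.prems
    by (intro brunn_minkowski_compact_real compact_minkowski_combination minkowski_combination_nonempty)
      auto
  finally show ?case .
qed simp

text \<open>Inner regularity is available for finite measures only, so it is applied to the
  restrictions of \<open>lborel\<close> to balls.\<close>
lemma lborel_inner_regular:
  fixes B :: "'a::euclidean_space set"
  assumes B: "B \<in> sets borel"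
  shows "emeasure lborel B = (SUP K\<in>{K. K \<subseteq> B \<and> compact K}. emeasure lborel K)"
proof (rule antisym)
  let ?C = "\<lambda>k::nat. cball (0::'a) (real k)"
  have approx: "emeasure lborel (?C k \<inter> B) \<le> (SUP K\<in>{K. K \<subseteq> B \<and> compact K}. emeasure lborel K)"
    for k
  proof -
    let ?M = "density lborel (indicator (?C k))"
    have "emeasure ?M (space ?M) \<noteq> \<infinity>"
      using emeasure_lborel_cball_finite[of 0 "real k"] by (simp add: emeasure_restricted less_top)
    then have "emeasure ?M B = (SUP K\<in>{K. K \<subseteq> B \<and> compact K}. emeasure ?M K)"
      using B by (intro inner_regular) auto
    also have "\<dots> \<le> (SUP K\<in>{K. K \<subseteq> B \<and> compact K}. emeasure lborel K)"
    proof (rule SUP_mono)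
      fix K assume K: "K \<in> {K. K \<subseteq> B \<and> compact K}"
      then have "emeasure ?M K = emeasure lborel (?C k \<inter> K)"
        by (simp add: emeasure_restricted borel_compact)
      also have "\<dots> \<le> emeasure lborel K"
        using K by (intro emeasure_mono) (auto simp: borel_compact)
      finally show "\<exists>K'\<in>{K. K \<subseteq> B \<and> compact K}. emeasure ?M K \<le> emeasure lborel K'"
        using K by blast
    qed
    finally show ?thesis
      using B by (simp add: emeasure_restricted)
  qed
  have "emeasure lborel B = (SUP k. emeasure lborel (?C k \<inter> B))"
  proof -
    have "(\<Union>k. ?C k \<inter> B) = B"
      by (auto simp: real_arch_simple)
    moreover have "range (\<lambda>k. ?C k \<inter> B) \<subseteq> sets lborel" "incseq (\<lambda>k. ?C k \<inter> B)"
      using B by (auto simp: incseq_def)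
    ultimately show ?thesis
      using SUP_emeasure_incseq[of "\<lambda>k. ?C k \<inter> B" lborel] by simp
  qed
  also have "\<dots> \<le> (SUP K\<in>{K. K \<subseteq> B \<and> compact K}. emeasure lborel K)"
    by (intro SUP_least approx)
  finally show "emeasure lborel B \<le> (SUP K\<in>{K. K \<subseteq> B \<and> compact K}. emeasure lborel K)" .
qed (use B in \<open>intro SUP_least emeasure_mono, auto simp: borel_compact\<close>)

lemma lborel_inner_regular_nonempty:
  fixes B :: "'a::euclidean_space set"
  assumes B: "B \<in> sets borel" "B \<noteq> {}"
  shows "emeasure lborel B = (SUP K\<in>{K. K \<subseteq> B \<and> compact K \<and> K \<noteq> {}}. emeasure lborel K)"
proof (rule antisym)
  obtain b where b: "b \<in> B"
    using B by auto
  have "emeasure lborel K \<le> (SUP K\<in>{K. K \<subseteq> B \<and> compact K \<and> K \<noteq> {}}. emeasure lborel K)"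
    if "K \<subseteq> B" "compact K" for K
  proof -
    have "emeasure lborel K \<le> emeasure lborel (insert b K)"
      using that by (intro emeasure_mono) (auto simp: borel_compact)
    also have "\<dots> \<le> (SUP K\<in>{K. K \<subseteq> B \<and> compact K \<and> K \<noteq> {}}. emeasure lborel K)"
      using that b by (intro SUP_upper) auto
    finally show ?thesis .
  qed
  then show "emeasure lborel B \<le> (SUP K\<in>{K. K \<subseteq> B \<and> compact K \<and> K \<noteq> {}}. emeasure lborel K)"
    using B by (subst lborel_inner_regular) (auto intro: SUP_least)
qed (use B in \<open>intro SUP_least emeasure_mono, auto simp: borel_compact\<close>)

text \<open>The offset \<open>c\<close> makes the statement strong enough for the induction on \<open>N\<close>.\<close>
lemma ennreal_sum_SUP_le:
  fixes g :: "nat \<Rightarrow> 'k \<Rightarrow> ennreal" and S :: "nat \<Rightarrow> 'k set"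
  assumes "\<And>i. i < N \<Longrightarrow> S i \<noteq> {}"
    and "\<And>K. (\<And>i. i < N \<Longrightarrow> K i \<in> S i) \<Longrightarrow> c + (\<Sum>i<N. g i (K i)) \<le> B"
  shows "c + (\<Sum>i<N. SUP k\<in>S i. g i k) \<le> B"
  using assms
proof (induction N arbitrary: c)
  case (Suc N)
  have "c + (\<Sum>i<Suc N. SUP k\<in>S i. g i k) = (c + (\<Sum>i<N. SUP k\<in>S i. g i k)) + (SUP k\<in>S N. g N k)"
    by (simp add: ac_simps)
  also have "\<dots> = (SUP k\<in>S N. (c + (\<Sum>i<N. SUP k\<in>S i. g i k)) + g N k)"
    using Suc.prems(1) by (intro ennreal_SUP_add_right) auto
  also have "\<dots> \<le> B"
  proof (intro SUP_least)
    fix k assume k: "k \<in> S N"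
    have "(c + g N k) + (\<Sum>i<N. SUP k\<in>S i. g i k) \<le> B"
    proof (rule Suc.IH)
      fix K assume "\<And>i. i < N \<Longrightarrow> K i \<in> S i"
      with k have "c + (\<Sum>i<Suc N. g i ((K(N := k)) i)) \<le> B"
        by (intro Suc.prems(2)) (auto simp: less_Suc_eq)
      then show "c + g N k + (\<Sum>i<N. g i (K i)) \<le> B"
        by (simp add: ac_simps)
    qed (use Suc.prems in auto)
    then show "c + (\<Sum>i<N. SUP k\<in>S i. g i k) + g N k \<le> B"
      by (simp add: ac_simps)
  qed
  finally show ?case .
qed simp

theorem brunn_minkowski_real:
  assumes A: "\<And>i. i < N \<Longrightarrow> A i \<in> sets borel" "\<And>i. i < N \<Longrightarrow> A i \<noteq> {}"
    and l: "\<And>i. i < N \<Longrightarrow> 0 < l i"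
    and C: "C \<in> sets borel" "minkowski_combination N l A \<subseteq> C"
  shows "(\<Sum>i<N. ennreal (l i) * emeasure lborel (A i)) \<le> emeasure lborel C"
proof -
  define KS where "KS i = {K. K \<subseteq> A i \<and> compact K \<and> K \<noteq> {}}" for i
  have inner: "emeasure lborel (A i) = (SUP K\<in>KS i. emeasure lborel K)" if "i < N" for i
    unfolding KS_def using A[OF that] by (rule lborel_inner_regular_nonempty)
  have "(\<Sum>i<N. ennreal (l i) * emeasure lborel (A i))
      = 0 + (\<Sum>i<N. SUP K\<in>KS i. ennreal (l i) * emeasure lborel K)"
    unfolding add_0 by (intro sum.cong refl) (simp add: inner SUP_mult_left_ennreal)
  also have "\<dots> \<le> emeasure lborel C"
  proof (rule ennreal_sum_SUP_le)
    show "KS i \<noteq> {}" if i: "i < N" for i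
    proof -
      obtain a where "a \<in> A i"
        using A(2)[OF i] by auto
      then have "{a} \<in> KS i"
        by (simp add: KS_def)
      then show ?thesis
        by auto
    qed
  next
    fix K assume K: "\<And>i. i < N \<Longrightarrow> K i \<in> KS i"
    have "(\<Sum>i<N. ennreal (l i) * emeasure lborel (K i))
        \<le> emeasure lborel (minkowski_combination N l K)"
      using K l by (intro brunn_minkowski_compact_real_sum) (auto simp: KS_def)
    also have "\<dots> \<le> emeasure lborel C"
    proof -
      have "minkowski_combination N l K \<subseteq> minkowski_combination N l A"
        using K by (intro minkowski_combination_mono) (auto simp: KS_def)
      then show ?thesis
        using emeasure_mono[OF order.trans[OF _ C(2)], of _ lborel] C(1) by simp
    qed
    finally show "0 + (\<Sum>i<N. ennreal (l i) * emeasure lborel (K i)) \<le> emeasure lborel C"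
      by simp
  qed
  finally show ?thesis .
qed

section \<open>The Prekopa-Leindler inequality on the real line\<close>

lemma emeasure_lborel_Ioi [simp]: "emeasure lborel {a::real<..} = \<infinity>"
proof -
  have "of_nat n \<le> emeasure lborel {a<..}" for n
  proof -
    have "of_nat n = emeasure lborel {a<..<a + real n}"
      by (simp add: ennreal_of_nat_eq_real_of_nat)
    also have "\<dots> \<le> emeasure lborel {a<..}"
      by (intro emeasure_mono) auto
    finally show ?thesis .
  qed
  then have "(SUP n. of_nat n) \<le> emeasure lborel {a<..}"
    by (rule SUP_least)
  then show ?thesis
    by (simp add: ennreal_SUP_of_nat_eq_top top_unique)
qed

lemma (in sigma_finite_measure) borel_measurable_emeasure_superlevel:
  assumes [measurable]: "G \<in> borel_measurable M"
  shows "(\<lambda>t. emeasure M {s \<in> space M. ennreal t < G s}) \<in> borel_measurable borel"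
proof -
  have "{p \<in> space (borel \<Otimes>\<^sub>M M). ennreal (fst p) < G (snd p)} \<in> sets (borel \<Otimes>\<^sub>M M)"
    by measurable
  then have "(\<lambda>t. emeasure M (Pair t -` {p \<in> space (borel \<Otimes>\<^sub>M M). ennreal (fst p) < G (snd p)}))
      \<in> borel_measurable borel"
    by (rule measurable_emeasure_Pair)
  moreover have "Pair t -` {p \<in> space (borel \<Otimes>\<^sub>M M). ennreal (fst p) < G (snd p)}
      = {s \<in> space M. ennreal t < G s}" for t
    by (auto simp: space_pair_measure)
  ultimately show ?thesis
    by simp
qed

lemma (in sigma_finite_measure) nn_integral_layer_cake:
  assumes [measurable]: "G \<in> borel_measurable M"
  shows "(\<integral>\<^sup>+s. G s \<partial>M)
    = (\<integral>\<^sup>+t. indicator {0<..} t * emeasure M {s \<in> space M. ennreal t < G s} \<partial>lborel)"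
proof -
  interpret pair_sigma_finite lborel M ..
  define f :: "real \<Rightarrow> 'a \<Rightarrow> ennreal" where "f t s = indicator {t. 0 < t \<and> ennreal t < G s} t" for t s
  have [measurable]: "case_prod f \<in> borel_measurable (lborel \<Otimes>\<^sub>M M)"
    unfolding f_def by measurable
  have "G s = (\<integral>\<^sup>+t. f t s \<partial>lborel)" for s
  proof (cases "G s")
    case (real g)
    then have "{t. 0 < t \<and> ennreal t < G s} = {0<..<g}"
      by (auto simp: ennreal_less_iff)
    with real show ?thesis
      by (simp add: f_def)
  next
    case top
    then have "{t. 0 < t \<and> ennreal t < G s} = {0<..}"
      by auto
    with top show ?thesis
      by (simp add: f_def)
  qed
  then have "(\<integral>\<^sup>+s. G s \<partial>M) = (\<integral>\<^sup>+s. (\<integral>\<^sup>+t. f t s \<partial>lborel) \<partial>M)"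
    by simp
  also have "\<dots> = (\<integral>\<^sup>+t. (\<integral>\<^sup>+s. f t s \<partial>M) \<partial>lborel)"
    by (rule Fubini') measurable
  also have "\<dots> = (\<integral>\<^sup>+t. indicator {0<..} t * emeasure M {s \<in> space M. ennreal t < G s} \<partial>lborel)"
  proof (intro nn_integral_cong)
    fix t :: real
    have "(\<integral>\<^sup>+s. f t s \<partial>M) = (\<integral>\<^sup>+s. indicator {0<..} t * indicator {s \<in> space M. ennreal t < G s} s \<partial>M)"
      by (intro nn_integral_cong) (auto simp: f_def indicator_def)
    then show "(\<integral>\<^sup>+s. f t s \<partial>M) = indicator {0<..} t * emeasure M {s \<in> space M. ennreal t < G s}"
      by (simp add: nn_integral_cmult_indicator)
  qed
  finally show ?thesis .
qed

lemma brunn_minkowski_superlevel_sets: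
  fixes G :: "nat \<Rightarrow> real \<Rightarrow> ennreal" and H :: "real \<Rightarrow> ennreal"
  assumes l: "\<And>i. i < N \<Longrightarrow> 0 < l i" and l1: "(\<Sum>i<N. l i) = 1"
    and G: "\<And>i. i < N \<Longrightarrow> G i \<in> borel_measurable borel"
    and H [measurable]: "H \<in> borel_measurable borel"
    and hyp: "\<And>s. (\<Prod>i<N. G i (s i) epowr l i) \<le> H (\<Sum>i<N. l i * s i)"
    and sup: "\<And>i. i < N \<Longrightarrow> (SUP s. G i s) = 1"
  shows "(\<Sum>i<N. ennreal (l i) * emeasure lborel {s. ennreal t < G i s}) \<le> emeasure lborel {s. ennreal t < H s}"
proof (cases "t < 1")
  case True
  show ?thesis
  proof (rule brunn_minkowski_real)
    fix i assume i: "i < N"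
    have [measurable]: "G i \<in> borel_measurable borel"
      using G[OF i] .
    show "{s. ennreal t < G i s} \<in> sets borel"
      by measurable
    have "ennreal t < (SUP s. G i s)"
      using True sup[OF i] by (simp add: ennreal_less_one_iff)
    then show "{s. ennreal t < G i s} \<noteq> {}"
      by (auto simp: less_SUP_iff)
  next
    show "{s. ennreal t < H s} \<in> sets borel"
      by measurable
    show "minkowski_combination N l (\<lambda>i. {s. ennreal t < G i s}) \<subseteq> {s. ennreal t < H s}"
    proof
      fix z assume "z \<in> minkowski_combination N l (\<lambda>i. {s. ennreal t < G i s})"
      then obtain a where z: "z = (\<Sum>i<N. l i * a i)" and a: "\<forall>i<N. ennreal t < G i (a i)"
        by (auto simp: minkowski_combination_def)
      have N: "{..<N} \<noteq> {}"
        using l1 by auto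
      with a have "ennreal t < Min ((\<lambda>i. G i (a i)) ` {..<N})"
        by simp
      also have "\<dots> \<le> (\<Prod>i<N. G i (a i) epowr l i)"
        using l l1 N by (intro Min_le_prod_epowr) auto
      also have "\<dots> \<le> H z"
        unfolding z by (rule hyp)
      finally show "z \<in> {s. ennreal t < H s}"
        by simp
    qed
  qed (use l in auto)
next
  case False
  have "{s. ennreal t < G i s} = {}" if i: "i < N" for i
  proof -
    have "G i s \<le> ennreal t" for s
      using False SUP_upper[of s UNIV "G i"] sup[OF i] by (simp add: ennreal_leI order_trans)
    then show ?thesis
      by (auto simp: not_less)
  qed
  then show ?thesis
    by simp
qed

theorem prekopa_leindler_real_normalized:
  fixes G :: "nat \<Rightarrow> real \<Rightarrow> ennreal" and H :: "real \<Rightarrow> ennreal"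
  assumes l: "\<And>i. i < N \<Longrightarrow> 0 < l i" and l1: "(\<Sum>i<N. l i) = 1"
    and G: "\<And>i. i < N \<Longrightarrow> G i \<in> borel_measurable borel"
    and H [measurable]: "H \<in> borel_measurable borel"
    and hyp: "\<And>s. (\<Prod>i<N. G i (s i) epowr l i) \<le> H (\<Sum>i<N. l i * s i)"
    and sup: "\<And>i. i < N \<Longrightarrow> (SUP s. G i s) = 1"
  shows "(\<Sum>i<N. ennreal (l i) * (\<integral>\<^sup>+s. G i s \<partial>lborel)) \<le> (\<integral>\<^sup>+s. H s \<partial>lborel)"
proof -
  let ?A = "\<lambda>i t. emeasure lborel {s. ennreal t < G i s}"
  have [measurable]: "(\<lambda>t. ?A i t) \<in> borel_measurable borel" if "i < N" for i
    using lborel.borel_measurable_emeasure_superlevel[of "G i"] G[OF that] by simp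
  have "(\<Sum>i<N. ennreal (l i) * (\<integral>\<^sup>+s. G i s \<partial>lborel))
      = (\<Sum>i<N. ennreal (l i) * (\<integral>\<^sup>+t. indicator {0<..} t * ?A i t \<partial>lborel))"
    using lborel.nn_integral_layer_cake[of "G _"] G by simp
  also have "\<dots> = (\<Sum>i<N. \<integral>\<^sup>+t. indicator {0<..} t * (ennreal (l i) * ?A i t) \<partial>lborel)"
    by (intro sum.cong refl, subst nn_integral_cmult[symmetric]) (auto simp: ac_simps)
  also have "\<dots> = (\<integral>\<^sup>+t. indicator {0<..} t * (\<Sum>i<N. ennreal (l i) * ?A i t) \<partial>lborel)"
    by (subst nn_integral_sum[symmetric]) (auto simp: sum_distrib_left)
  also have "\<dots> \<le> (\<integral>\<^sup>+t. indicator {0<..} t * emeasure lborel {s. ennreal t < H s} \<partial>lborel)"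
    using brunn_minkowski_superlevel_sets[OF l l1 G H hyp sup]
    by (intro nn_integral_mono mult_left_mono) auto
  also have "\<dots> = (\<integral>\<^sup>+s. H s \<partial>lborel)"
    using lborel.nn_integral_layer_cake[of H] by simp
  finally show ?thesis .
qed

lemma prekopa_leindler_real_bounded:
  fixes G :: "nat \<Rightarrow> real \<Rightarrow> ennreal" and H :: "real \<Rightarrow> ennreal"
  assumes l: "\<And>i. i < N \<Longrightarrow> 0 < l i" and l1: "(\<Sum>i<N. l i) = 1"
    and G: "\<And>i. i < N \<Longrightarrow> G i \<in> borel_measurable borel"
    and H [measurable]: "H \<in> borel_measurable borel"
    and hyp: "\<And>s. (\<Prod>i<N. G i (s i) epowr l i) \<le> H (\<Sum>i<N. l i * s i)"
    and sup: "\<And>i. i < N \<Longrightarrow> 0 < (SUP s. G i s) \<and> (SUP s. G i s) < \<infinity>"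
  shows "(\<Prod>i<N. (\<integral>\<^sup>+s. G i s \<partial>lborel) epowr l i) \<le> (\<integral>\<^sup>+s. H s \<partial>lborel)"
proof -
  define d where "d i = 1 / enn2real (SUP s. G i s)" for i
  have d: "0 < d i" "ennreal (d i) * (SUP s. G i s) = 1" if i: "i < N" for i
  proof -
    obtain c where "(SUP s. G i s) = ennreal c" "0 < c"
      using sup[OF i] by (cases "SUP s. G i s") auto
    then show "0 < d i" "ennreal (d i) * (SUP s. G i s) = 1"
      by (simp_all add: d_def ennreal_mult[symmetric])
  qed
  define g where "g = (\<Prod>i<N. d i powr l i)"
  have g: "0 < g"
    unfolding g_def by (intro prod_pos) (auto dest!: d(1))
  let ?G = "\<lambda>i s. ennreal (d i) * G i s"
  have scale: "(\<Prod>i<N. (ennreal (d i) * x i) epowr l i) = ennreal g * (\<Prod>i<N. x i epowr l i)" for x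
    unfolding g_def by (intro prod_ennreal_mult_epowr) (auto intro: less_imp_le[OF d(1)])
  have normalized: "(\<Sum>i<N. ennreal (l i) * (\<integral>\<^sup>+s. ?G i s \<partial>lborel)) \<le> (\<integral>\<^sup>+s. ennreal g * H s \<partial>lborel)"
  proof (rule prekopa_leindler_real_normalized[OF l l1])
    show "?G i \<in> borel_measurable borel" if "i < N" for i
      using G[OF that] by measurable
    show "(\<Prod>i<N. ?G i (s i) epowr l i) \<le> ennreal g * H (\<Sum>i<N. l i * s i)" for s
      using hyp[of s] by (simp add: scale mult_left_mono)
    show "(SUP s. ?G i s) = 1" if "i < N" for i
      using d[OF that] by (simp add: SUP_mult_left_ennreal)
  qed measurable
  have "ennreal g * (\<Prod>i<N. (\<integral>\<^sup>+s. G i s \<partial>lborel) epowr l i)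
      = (\<Prod>i<N. (\<integral>\<^sup>+s. ?G i s \<partial>lborel) epowr l i)"
    using G by (simp add: scale[symmetric] nn_integral_cmult)
  also have "\<dots> \<le> (\<Sum>i<N. ennreal (l i) * (\<integral>\<^sup>+s. ?G i s \<partial>lborel))"
    using l l1 by (intro weighted_geometric_mean_le_arithmetic_mean_ennreal) auto
  also have "\<dots> \<le> ennreal g * (\<integral>\<^sup>+s. H s \<partial>lborel)"
    using normalized by (simp add: nn_integral_cmult)
  finally show ?thesis
    using g by (simp add: ennreal_mult_le_mult_iff)
qed

lemma prekopa_leindler_real_truncated:
  fixes G :: "nat \<Rightarrow> real \<Rightarrow> ennreal" and H :: "real \<Rightarrow> ennreal"
  assumes l: "\<And>i. i < N \<Longrightarrow> 0 < l i" and l1: "(\<Sum>i<N. l i) = 1"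
    and G: "\<And>i. i < N \<Longrightarrow> G i \<in> borel_measurable borel"
    and H [measurable]: "H \<in> borel_measurable borel"
    and hyp: "\<And>s. (\<Prod>i<N. G i (s i) epowr l i) \<le> H (\<Sum>i<N. l i * s i)"
    and nonzero: "\<And>i. i < N \<Longrightarrow> (\<integral>\<^sup>+s. G i s \<partial>lborel) \<noteq> 0"
  shows "(\<Prod>i<N. (\<integral>\<^sup>+s. min (G i s) (of_nat (Suc k)) \<partial>lborel) epowr l i) \<le> (\<integral>\<^sup>+s. H s \<partial>lborel)"
proof (rule prekopa_leindler_real_bounded[OF l l1 _ H])
  show "(\<lambda>s. min (G i s) (of_nat (Suc k))) \<in> borel_measurable borel" if "i < N" for i
    using G[OF that] by measurable
  show "(\<Prod>i<N. min (G i (s i)) (of_nat (Suc k)) epowr l i) \<le> H (\<Sum>i<N. l i * s i)" for s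
    using l by (intro order.trans[OF prod_epowr_mono hyp]) (auto simp: less_imp_le)
  fix i assume i: "i < N"
  have "\<exists>s. G i s \<noteq> 0"
  proof (rule ccontr)
    assume "\<nexists>s. G i s \<noteq> 0"
    then have "G i = (\<lambda>_. 0)"
      by auto
    then show False
      using nonzero[OF i] by simp
  qed
  then obtain s where "G i s \<noteq> 0"
    by auto
  then have "0 < min (G i s) (of_nat (Suc k))"
    by (simp add: zero_less_iff_neq_zero del: of_nat_Suc)
  also have "\<dots> \<le> (SUP s. min (G i s) (of_nat (Suc k)))"
    by (rule SUP_upper) simp
  finally have "0 < (SUP s. min (G i s) (of_nat (Suc k)))" .
  moreover have "(SUP s. min (G i s) (of_nat (Suc k))) \<le> of_nat (Suc k)"
    by (intro SUP_least) simp
  ultimately show "0 < (SUP s. min (G i s) (of_nat (Suc k))) \<and> (SUP s. min (G i s) (of_nat (Suc k))) < \<infinity>"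
    by (simp add: le_less_trans of_nat_less_top del: of_nat_Suc)
qed

text \<open>Truncating at height \<open>k + 1\<close> makes the suprema finite; monotone convergence removes the
  truncation.\<close>
theorem prekopa_leindler_real:
  fixes G :: "nat \<Rightarrow> real \<Rightarrow> ennreal" and H :: "real \<Rightarrow> ennreal"
  assumes l: "\<And>i. i < N \<Longrightarrow> 0 < l i" and l1: "(\<Sum>i<N. l i) = 1"
    and G: "\<And>i. i < N \<Longrightarrow> G i \<in> borel_measurable borel"
    and H [measurable]: "H \<in> borel_measurable borel"
    and hyp: "\<And>s. (\<Prod>i<N. G i (s i) epowr l i) \<le> H (\<Sum>i<N. l i * s i)"
  shows "(\<Prod>i<N. (\<integral>\<^sup>+s. G i s \<partial>lborel) epowr l i) \<le> (\<integral>\<^sup>+s. H s \<partial>lborel)"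
proof (cases "\<exists>i<N. (\<integral>\<^sup>+s. G i s \<partial>lborel) = 0")
  case True
  then obtain j where "j < N" "(\<integral>\<^sup>+s. G j s \<partial>lborel) = 0"
    by auto
  then have "(\<Prod>i<N. (\<integral>\<^sup>+s. G i s \<partial>lborel) epowr l i) = 0"
    by (intro prod_zero bexI[of _ j]) auto
  then show ?thesis
    by (simp only: zero_le)
next
  case False
  define a where "a i k = (\<integral>\<^sup>+s. min (G i s) (of_nat (Suc k)) \<partial>lborel)" for i k
  have incseq: "incseq (\<lambda>k. min (G i s) (of_nat (Suc k)))" for i s
    unfolding incseq_def by (intro allI impI min.mono) (simp_all del: of_nat_Suc)
  have a_incseq: "incseq (\<lambda>k. a i k epowr l i)" if "i < N" for i
    using incseq l[OF that] unfolding a_def incseq_def by (auto intro!: epowr_mono nn_integral_mono)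
  have a_SUP: "(\<integral>\<^sup>+s. G i s \<partial>lborel) = (SUP k. a i k)" if "i < N" for i
  proof -
    have "(\<integral>\<^sup>+s. G i s \<partial>lborel) = (\<integral>\<^sup>+s. (SUP k. min (G i s) (of_nat (Suc k))) \<partial>lborel)"
      by (simp only: SUP_min_of_nat_Suc_ennreal)
    also have "\<dots> = (SUP k. a i k)"
      unfolding a_def using G[OF that] incseq
      by (intro nn_integral_monotone_convergence_SUP) (auto simp: incseq_def le_fun_def)
    finally show ?thesis .
  qed
  have "(\<Prod>i<N. (\<integral>\<^sup>+s. G i s \<partial>lborel) epowr l i) = (\<Prod>i<N. SUP k. a i k epowr l i)"
    using l by (simp add: a_SUP epowr_SUP)
  also have "\<dots> = (SUP k. \<Prod>i<N. a i k epowr l i)"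
    using a_incseq by (intro SUP_prod_incseq_ennreal[symmetric]) auto
  also have "\<dots> \<le> (\<integral>\<^sup>+s. H s \<partial>lborel)"
    unfolding a_def using prekopa_leindler_real_truncated[OF l l1 G H hyp] False
    by (intro SUP_least) auto
  finally show ?thesis .
qed

section \<open>The multiplicative Prekopa-Leindler inequality\<close>

lemma SUP_nn_integral_indicator_incseq:
  fixes f :: "'a \<Rightarrow> ennreal"
  assumes A: "incseq A" "\<And>k. A k \<in> sets M" and f [measurable]: "f \<in> borel_measurable M"
  shows "(SUP k. \<integral>\<^sup>+x. f x * indicator (A k) x \<partial>M) = (\<integral>\<^sup>+x. f x * indicator (\<Union>k. A k) x \<partial>M)"
proof -
  have "indicator (\<Union>k. A k) x = (SUP k. indicator (A k) x :: ennreal)" for x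
  proof (rule LIMSEQ_unique[OF LIMSEQ_indicator_incseq[OF A(1)] LIMSEQ_SUP])
    show "incseq (\<lambda>k. indicator (A k) x :: ennreal)"
      using A(1) by (auto simp: incseq_def indicator_def subset_iff)
  qed
  then have "(\<integral>\<^sup>+x. f x * indicator (\<Union>k. A k) x \<partial>M) = (\<integral>\<^sup>+x. (SUP k. f x * indicator (A k) x) \<partial>M)"
    by (simp add: SUP_mult_left_ennreal)
  also have "\<dots> = (SUP k. \<integral>\<^sup>+x. f x * indicator (A k) x \<partial>M)"
    using A by (intro nn_integral_monotone_convergence_SUP)
      (auto simp: incseq_def le_fun_def indicator_def subset_iff)
  finally show ?thesis ..
qed

lemma nn_integral_exp_substitution:
  fixes g :: "real \<Rightarrow> ennreal"
  assumes [measurable]: "g \<in> borel_measurable borel"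
  shows "(\<integral>\<^sup>+y. g y * indicator {0<..} y \<partial>lborel) = (\<integral>\<^sup>+s. g (exp s) * ennreal (exp s) \<partial>lborel)"
proof -
  let ?A = "\<lambda>k::nat. {exp (- real (Suc k))..exp (real (Suc k))}"
  let ?B = "\<lambda>k::nat. {- real (Suc k)..real (Suc k)}"
  have "(\<Union>k. ?A k) = {0<..}"
  proof (intro set_eqI iffI)
    fix y :: real assume "y \<in> {0<..}"
    then have y: "exp (ln y) = y"
      by simp
    obtain k :: nat where "\<bar>ln y\<bar> \<le> real k"
      using real_arch_simple by blast
    then have "exp (- real (Suc k)) \<le> exp (ln y)" "exp (ln y) \<le> exp (real (Suc k))"
      by auto
    then have "y \<in> ?A k"
      unfolding y by simp
    then show "y \<in> (\<Union>k. ?A k)"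
      by blast
  qed (auto intro: less_le_trans[OF exp_gt_zero])
  moreover have "(\<Union>k. ?B k) = UNIV"
  proof (intro set_eqI iffI)
    fix s :: real
    obtain k :: nat where "\<bar>s\<bar> \<le> real k"
      using real_arch_simple by blast
    then have "s \<in> ?B k"
      by auto
    then show "s \<in> (\<Union>k. ?B k)"
      by blast
  qed simp
  moreover have "(\<integral>\<^sup>+y. g y * indicator (?A k) y \<partial>lborel)
      = (\<integral>\<^sup>+s. g (exp s) * ennreal (exp s) * indicator (?B k) s \<partial>lborel)" for k
    by (rule nn_integral_substitution_aux) (auto intro!: derivative_eq_intros continuous_intros)
  moreover have "incseq ?A" "incseq ?B"
    by (auto simp: incseq_def)
  ultimately show ?thesis
    using SUP_nn_integral_indicator_incseq[of ?A lborel g]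
      SUP_nn_integral_indicator_incseq[of ?B lborel "\<lambda>s. g (exp s) * ennreal (exp s)"]
    by simp
qed

text \<open>The substitution y = e^s turns weighted geometric means of the y_i into weighted arithmetic
  means of the s_i, and the Jacobian factors e^s_i combine in the same way.\<close>
theorem prekopa_leindler_multiplicative_real:
  fixes g :: "nat \<Rightarrow> real \<Rightarrow> ennreal" and h :: "real \<Rightarrow> ennreal"
  assumes l: "\<And>i. i < N \<Longrightarrow> 0 < l i" and l1: "(\<Sum>i<N. l i) = 1"
    and g: "\<And>i. i < N \<Longrightarrow> g i \<in> borel_measurable borel"
    and h [measurable]: "h \<in> borel_measurable borel"
    and g_nonpos: "\<And>i y. i < N \<Longrightarrow> y \<le> 0 \<Longrightarrow> g i y = 0"
    and hyp: "\<And>y. (\<And>i. i < N \<Longrightarrow> 0 < y i) \<Longrightarrow> (\<Prod>i<N. g i (y i) epowr l i) \<le> h (\<Prod>i<N. y i powr l i)"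
  shows "(\<Prod>i<N. (\<integral>\<^sup>+y. g i y \<partial>lborel) epowr l i) \<le> (\<integral>\<^sup>+y. h y \<partial>lborel)"
proof -
  let ?G = "\<lambda>i s. g i (exp s) * ennreal (exp s)"
  have "(\<integral>\<^sup>+y. g i y \<partial>lborel) = (\<integral>\<^sup>+s. ?G i s \<partial>lborel)" if i: "i < N" for i
  proof -
    have "(\<integral>\<^sup>+y. g i y \<partial>lborel) = (\<integral>\<^sup>+y. g i y * indicator {0<..} y \<partial>lborel)"
      using g_nonpos[OF i] by (intro nn_integral_cong) (auto simp: indicator_def not_less)
    then show ?thesis
      using g[OF i] by (simp add: nn_integral_exp_substitution)
  qed
  then have "(\<Prod>i<N. (\<integral>\<^sup>+y. g i y \<partial>lborel) epowr l i) = (\<Prod>i<N. (\<integral>\<^sup>+s. ?G i s \<partial>lborel) epowr l i)"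
    by simp
  also have "\<dots> \<le> (\<integral>\<^sup>+s. h (exp s) * ennreal (exp s) \<partial>lborel)"
  proof (rule prekopa_leindler_real[OF l l1])
    show "?G i \<in> borel_measurable borel" if "i < N" for i
      using g[OF that] by measurable
    fix s :: "nat \<Rightarrow> real"
    have "(\<Prod>i<N. ?G i (s i) epowr l i) = (\<Prod>i<N. g i (exp (s i)) epowr l i) * ennreal (exp (\<Sum>i<N. l i * s i))"
      using l by (simp add: epowr_mult prod.distrib prod_ennreal exp_sum powr_def mult.commute)
    also have "\<dots> \<le> h (\<Prod>i<N. exp (s i) powr l i) * ennreal (exp (\<Sum>i<N. l i * s i))"
      by (intro mult_right_mono hyp) auto
    also have "(\<Prod>i<N. exp (s i) powr l i) = exp (\<Sum>i<N. l i * s i)"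
      by (simp add: powr_def exp_sum mult.commute)
    finally show "(\<Prod>i<N. ?G i (s i) epowr l i) \<le> h (exp (\<Sum>i<N. l i * s i)) * ennreal (exp (\<Sum>i<N. l i * s i))" .
  qed measurable
  also have "\<dots> = (\<integral>\<^sup>+y. h y * indicator {0<..} y \<partial>lborel)"
    by (simp add: nn_integral_exp_substitution)
  also have "\<dots> \<le> (\<integral>\<^sup>+y. h y \<partial>lborel)"
    by (intro nn_integral_mono) (auto simp: indicator_def)
  finally show ?thesis .
qed

text \<open>Outside \<open>I\<close> the value is \<open>undefined\<close>, as for the elements of \<open>space (PiM I M)\<close>.\<close>
definition componentwise_geometric_mean :: "'b set \<Rightarrow> nat \<Rightarrow> (nat \<Rightarrow> real) \<Rightarrow> (nat \<Rightarrow> 'b \<Rightarrow> real) \<Rightarrow> 'b \<Rightarrow> real"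
  where "componentwise_geometric_mean I N l x = (\<lambda>j. if j \<in> I then \<Prod>i<N. x i j powr l i else undefined)"

lemma componentwise_geometric_mean_insert:
  "k \<notin> I \<Longrightarrow> componentwise_geometric_mean (insert k I) N l (\<lambda>i. (x i)(k := y i))
     = (componentwise_geometric_mean I N l x)(k := \<Prod>i<N. y i powr l i)"
  by (auto simp: componentwise_geometric_mean_def fun_eq_iff)

lemma componentwise_geometric_mean_in_space:
  "componentwise_geometric_mean I N l x \<in> space (PiM I (\<lambda>_. lborel))"
  by (auto simp: componentwise_geometric_mean_def space_PiM PiE_def extensional_def)

lemma prekopa_leindler_multiplicative_PiM_insert:
  fixes f :: "nat \<Rightarrow> ('b \<Rightarrow> real) \<Rightarrow> ennreal" and h :: "('b \<Rightarrow> real) \<Rightarrow> ennreal"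
  assumes k: "k \<notin> I"
    and l: "\<And>i. i < N \<Longrightarrow> 0 < l i" and l1: "(\<Sum>i<N. l i) = 1"
    and f: "\<And>i. i < N \<Longrightarrow> f i \<in> borel_measurable (PiM (insert k I) (\<lambda>_. lborel))"
    and h: "h \<in> borel_measurable (PiM (insert k I) (\<lambda>_. lborel))"
    and f_nonpos: "\<And>i x. i < N \<Longrightarrow> \<not> (\<forall>j\<in>insert k I. 0 < x j) \<Longrightarrow> f i x = 0"
    and hyp: "\<And>x. (\<And>i. i < N \<Longrightarrow> x i \<in> space (PiM (insert k I) (\<lambda>_. lborel)) \<and> (\<forall>j\<in>insert k I. 0 < x i j)) \<Longrightarrow>
      (\<Prod>i<N. f i (x i) epowr l i) \<le> h (componentwise_geometric_mean (insert k I) N l x)"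
    and x: "\<And>i. i < N \<Longrightarrow> x i \<in> space (PiM I (\<lambda>_. lborel)) \<and> (\<forall>j\<in>I. 0 < x i j)"
  shows "(\<Prod>i<N. (\<integral>\<^sup>+y. f i ((x i)(k := y)) \<partial>lborel) epowr l i)
    \<le> (\<integral>\<^sup>+y. h ((componentwise_geometric_mean I N l x)(k := y)) \<partial>lborel)"
proof (rule prekopa_leindler_multiplicative_real[OF l l1])
  have update: "(\<lambda>y. z(k := y)) \<in> lborel \<rightarrow>\<^sub>M PiM (insert k I) (\<lambda>_. lborel)"
    if "z \<in> space (PiM I (\<lambda>_. lborel))" for z
    using that k by (intro measurable_component_update) auto
  show "(\<lambda>y. f i ((x i)(k := y))) \<in> borel_measurable borel" if i: "i < N" for i
    using measurable_compose[OF update[OF conjunct1[OF x[OF i]]] f[OF i]] by (simp add: fun_upd_def)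
  show "(\<lambda>y. h ((componentwise_geometric_mean I N l x)(k := y))) \<in> borel_measurable borel"
    using measurable_compose[OF update[OF componentwise_geometric_mean_in_space] h]
    by (simp add: fun_upd_def)
  show "f i ((x i)(k := y)) = 0" if "i < N" "y \<le> 0" for i y
    using f_nonpos that by auto
  fix y :: "nat \<Rightarrow> real" assume y: "\<And>i. i < N \<Longrightarrow> 0 < y i"
  have "(\<Prod>i<N. f i ((x i)(k := y i)) epowr l i)
      \<le> h (componentwise_geometric_mean (insert k I) N l (\<lambda>i. (x i)(k := y i)))"
    using x y k by (intro hyp) (auto simp: space_PiM PiE_def extensional_def)
  then show "(\<Prod>i<N. f i ((x i)(k := y i)) epowr l i)
      \<le> h ((componentwise_geometric_mean I N l x)(k := \<Prod>i<N. y i powr l i))"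
    using k by (simp add: componentwise_geometric_mean_insert)
qed

theorem prekopa_leindler_multiplicative_PiM:
  fixes f :: "nat \<Rightarrow> ('b \<Rightarrow> real) \<Rightarrow> ennreal" and h :: "('b \<Rightarrow> real) \<Rightarrow> ennreal"
  assumes I: "finite I"
    and l: "\<And>i. i < N \<Longrightarrow> 0 < l i" and l1: "(\<Sum>i<N. l i) = 1"
    and f: "\<And>i. i < N \<Longrightarrow> f i \<in> borel_measurable (PiM I (\<lambda>_. lborel))"
    and h: "h \<in> borel_measurable (PiM I (\<lambda>_. lborel))"
    and f_nonpos: "\<And>i x. i < N \<Longrightarrow> \<not> (\<forall>j\<in>I. 0 < x j) \<Longrightarrow> f i x = 0"
    and hyp: "\<And>x. (\<And>i. i < N \<Longrightarrow> x i \<in> space (PiM I (\<lambda>_. lborel)) \<and> (\<forall>j\<in>I. 0 < x i j)) \<Longrightarrow>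
      (\<Prod>i<N. f i (x i) epowr l i) \<le> h (componentwise_geometric_mean I N l x)"
  shows "(\<Prod>i<N. (\<integral>\<^sup>+x. f i x \<partial>PiM I (\<lambda>_. lborel)) epowr l i) \<le> (\<integral>\<^sup>+x. h x \<partial>PiM I (\<lambda>_. lborel))"
  using I f h f_nonpos hyp
proof (induction I arbitrary: f h rule: finite_induct)
  case empty
  let ?u = "(\<lambda>_. undefined) :: 'b \<Rightarrow> real"
  have "(\<Prod>i<N. f i ?u epowr l i) \<le> h (componentwise_geometric_mean {} N l (\<lambda>_. ?u))"
    by (intro empty.prems(4)) (auto simp: space_PiM)
  then show ?case
    by (simp add: PiM_empty nn_integral_count_space_finite componentwise_geometric_mean_def)
next
  case (insert k I)
  interpret product_sigma_finite "\<lambda>_. lborel :: real measure" ..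
  let ?P = "\<lambda>I. PiM I (\<lambda>_. lborel :: real measure)"
  define F where "F i x = (\<integral>\<^sup>+y. f i (x(k := y)) \<partial>lborel)" for i x
  define H where "H x = (\<integral>\<^sup>+y. h (x(k := y)) \<partial>lborel)" for x
  have "(\<Prod>i<N. (\<integral>\<^sup>+x. F i x \<partial>?P I) epowr l i) \<le> (\<integral>\<^sup>+x. H x \<partial>?P I)"
  proof (rule insert.IH)
    show "F i \<in> borel_measurable (?P I)" if "i < N" for i
      using insert.prems(1)[OF that] unfolding F_def by measurable
    show "H \<in> borel_measurable (?P I)"
      using insert.prems(2) unfolding H_def by measurable
    show "F i x = 0" if "i < N" "\<not> (\<forall>j\<in>I. 0 < x j)" for i x
    proof -
      have "f i (x(k := y)) = 0" for y
        using that insert.hyps by (intro insert.prems(3)) auto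
      then show ?thesis
        by (simp add: F_def)
    qed
    show "(\<Prod>i<N. F i (x i) epowr l i) \<le> H (componentwise_geometric_mean I N l x)"
      if "\<And>i. i < N \<Longrightarrow> x i \<in> space (?P I) \<and> (\<forall>j\<in>I. 0 < x i j)" for x
      unfolding F_def H_def
      using insert.hyps(2) l l1 insert.prems that by (rule prekopa_leindler_multiplicative_PiM_insert)
  qed
  moreover have "(\<integral>\<^sup>+x. f i x \<partial>?P (insert k I)) = (\<integral>\<^sup>+x. F i x \<partial>?P I)" if "i < N" for i
    unfolding F_def using insert.hyps insert.prems(1)[OF that] by (intro product_nn_integral_insert) auto
  moreover have "(\<integral>\<^sup>+x. h x \<partial>?P (insert k I)) = (\<integral>\<^sup>+x. H x \<partial>?P I)"
    unfolding H_def using insert.hyps insert.prems(2) by (intro product_nn_integral_insert) auto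
  ultimately show ?case
    by simp
qed

lemma nn_integral_lborel_eq_PiM_Basis:
  fixes F :: "'a::euclidean_space \<Rightarrow> ennreal"
  assumes [measurable]: "F \<in> borel_measurable borel"
  shows "(\<integral>\<^sup>+x. F x \<partial>lborel) = (\<integral>\<^sup>+y. F (\<Sum>b\<in>Basis. y b *\<^sub>R b) \<partial>PiM Basis (\<lambda>_. lborel))"
  by (subst lborel_eq) (simp add: nn_integral_distr)

lemma sum_Basis_vec_nth: "(\<Sum>b\<in>Basis. y b *\<^sub>R b) $ j = y (axis j (1::real))"
  by (simp add: cart_eq_inner_axis inner_sum_left_Basis)

lemma mem_pos_orthant: "x \<in> pos_orthant \<longleftrightarrow> (\<forall>j. 0 < x $ j)"
  by (simp add: pos_orthant_def)

lemma pos_orthant_borel [measurable]: "pos_orthant \<in> sets borel"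
  unfolding pos_orthant_def by measurable

definition geometric_mean_vec :: "nat \<Rightarrow> (nat \<Rightarrow> real) \<Rightarrow> (nat \<Rightarrow> real ^ 'n) \<Rightarrow> real ^ 'n"
  where "geometric_mean_vec N l x = (\<chi> j. \<Prod>i<N. x i $ j powr l i)"

lemma geometric_mean_vec_nth [simp]: "geometric_mean_vec N l x $ j = (\<Prod>i<N. x i $ j powr l i)"
  by (simp add: geometric_mean_vec_def)

lemma geometric_mean_vec_pos_orthant:
  "(\<And>i. i < N \<Longrightarrow> x i \<in> pos_orthant) \<Longrightarrow> geometric_mean_vec N l x \<in> pos_orthant"
  by (auto simp: mem_pos_orthant intro!: prod_pos) (metis less_irrefl)

theorem prekopa_leindler_multiplicative_vec:
  fixes F :: "nat \<Rightarrow> real ^ 'n \<Rightarrow> ennreal" and H :: "real ^ 'n \<Rightarrow> ennreal"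
  assumes l: "\<And>i. i < N \<Longrightarrow> 0 < l i" and l1: "(\<Sum>i<N. l i) = 1"
    and F: "\<And>i. i < N \<Longrightarrow> F i \<in> borel_measurable borel"
    and H [measurable]: "H \<in> borel_measurable borel"
    and F_outside: "\<And>i x. i < N \<Longrightarrow> x \<notin> pos_orthant \<Longrightarrow> F i x = 0"
    and hyp: "\<And>x. (\<And>i. i < N \<Longrightarrow> x i \<in> pos_orthant) \<Longrightarrow>
      (\<Prod>i<N. F i (x i) epowr l i) \<le> H (geometric_mean_vec N l x)"
  shows "(\<Prod>i<N. (\<integral>\<^sup>+x. F i x \<partial>lborel) epowr l i) \<le> (\<integral>\<^sup>+x. H x \<partial>lborel)"
proof -
  let ?e = "\<lambda>y. \<Sum>b\<in>Basis. y b *\<^sub>R b :: real ^ 'n"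
  have e_pos_orthant: "?e y \<in> pos_orthant \<longleftrightarrow> (\<forall>b\<in>Basis. 0 < y b)" for y
    unfolding mem_pos_orthant sum_Basis_vec_nth by (auto simp: Basis_vec_def)
  have "(\<Prod>i<N. (\<integral>\<^sup>+y. F i (?e y) \<partial>PiM Basis (\<lambda>_. lborel)) epowr l i)
      \<le> (\<integral>\<^sup>+y. H (?e y) \<partial>PiM Basis (\<lambda>_. lborel))"
  proof (rule prekopa_leindler_multiplicative_PiM[OF finite_Basis l l1])
    show "(\<lambda>y. F i (?e y)) \<in> borel_measurable (PiM Basis (\<lambda>_. lborel))" if "i < N" for i
      using F[OF that] by measurable
    show "(\<lambda>y. H (?e y)) \<in> borel_measurable (PiM Basis (\<lambda>_. lborel))"
      by measurable
    show "F i (?e y) = 0" if "i < N" "\<not> (\<forall>b\<in>Basis. 0 < y b)" for i y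
      using that by (intro F_outside) (simp_all add: e_pos_orthant)
    fix x :: "nat \<Rightarrow> real ^ 'n \<Rightarrow> real"
    assume "\<And>i. i < N \<Longrightarrow> x i \<in> space (PiM Basis (\<lambda>_. lborel)) \<and> (\<forall>b\<in>Basis. 0 < x i b)"
    then have "(\<Prod>i<N. F i (?e (x i)) epowr l i) \<le> H (geometric_mean_vec N l (\<lambda>i. ?e (x i)))"
      by (intro hyp) (simp add: e_pos_orthant)
    also have "geometric_mean_vec N l (\<lambda>i. ?e (x i)) = ?e (componentwise_geometric_mean Basis N l x)"
      unfolding vec_eq_iff sum_Basis_vec_nth geometric_mean_vec_nth
      by (auto simp: componentwise_geometric_mean_def Basis_vec_def)
    finally show "(\<Prod>i<N. F i (?e (x i)) epowr l i) \<le> H (?e (componentwise_geometric_mean Basis N l x))" .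
  qed
  then show ?thesis
    using F by (simp add: nn_integral_lborel_eq_PiM_Basis)
qed

section \<open>The weight e^-V\<close>

lemma emexp_ereal [simp]: "emexp (ereal v) = ennreal (exp (- v))"
  by (simp add: emexp_def)

lemma emexp_infty [simp]: "emexp \<infinity> = 0"
  by (simp add: emexp_def)

lemma borel_measurable_emexp [measurable]: "emexp \<in> borel_measurable borel"
  unfolding emexp_def[abs_def] by measurable

lemma ereal_convex_on_finite_part:
  fixes W :: "'a::real_vector \<Rightarrow> ereal"
  assumes conv: "ereal_convex_on UNIV W" and not_minf: "\<And>t. W t \<noteq> -\<infinity>"
  shows "convex {t. W t \<noteq> \<infinity>}" and "convex_on {t. W t \<noteq> \<infinity>} (\<lambda>t. real_of_ereal (W t))"
proof -
  let ?C = "{t. W t \<noteq> \<infinity>}"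
  have key: "W (u *\<^sub>R x + v *\<^sub>R y) \<le> ereal (u * real_of_ereal (W x) + v * real_of_ereal (W y))"
    if xy: "x \<in> ?C" "y \<in> ?C" and uv: "0 \<le> u" "0 \<le> v" "u + v = 1" for x y u v
  proof -
    obtain a b where ab: "W x = ereal a" "W y = ereal b"
      using xy not_minf[of x] not_minf[of y] by (cases "W x"; cases "W y") auto
    consider "u = 0" | "v = 0" | "0 < u \<and> u < 1"
      using uv by fastforce
    then show ?thesis
    proof cases
      case 3
      then have "W (u *\<^sub>R x + (1 - u) *\<^sub>R y) \<le> ereal u * W x + ereal (1 - u) * W y"
        using conv unfolding ereal_convex_on_def by blast
      moreover have "v = 1 - u"
        using uv by simp
      ultimately show ?thesis
        using ab by simp
    qed (use uv ab in auto)
  qed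
  show convex: "convex ?C"
    unfolding convex_def using key by fastforce
  have "real_of_ereal (W (u *\<^sub>R x + v *\<^sub>R y)) \<le> u * real_of_ereal (W x) + v * real_of_ereal (W y)"
    if "x \<in> ?C" "y \<in> ?C" "0 \<le> u" "0 \<le> v" "u + v = 1" for x y u v
    using key[OF that] not_minf[of "u *\<^sub>R x + v *\<^sub>R y"]
    by (cases "W (u *\<^sub>R x + v *\<^sub>R y)") auto
  with convex show "convex_on ?C (\<lambda>t. real_of_ereal (W t))"
    unfolding convex_on_def by blast
qed

lemma ereal_convex_on_sum:
  fixes W :: "'a::real_vector \<Rightarrow> ereal" and s :: "nat \<Rightarrow> 'a"
  assumes conv: "ereal_convex_on UNIV W" and not_minf: "\<And>t. W t \<noteq> -\<infinity>"
    and l: "\<And>i. i < N \<Longrightarrow> 0 < l i" and l1: "(\<Sum>i<N. l i) = 1"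
    and fin: "\<And>i. i < N \<Longrightarrow> W (s i) \<noteq> \<infinity>"
  shows "W (\<Sum>i<N. l i *\<^sub>R s i) \<le> ereal (\<Sum>i<N. l i * real_of_ereal (W (s i)))"
proof -
  note finite_part = ereal_convex_on_finite_part[OF conv not_minf]
  have N: "{..<N} \<noteq> {}"
    using l1 by auto
  have mem: "W (\<Sum>i<N. l i *\<^sub>R s i) \<noteq> \<infinity>"
    using convex_sum[OF _ finite_part(1), of "{..<N}" l s] l l1 fin by (auto intro: less_imp_le)
  have "real_of_ereal (W (\<Sum>i<N. l i *\<^sub>R s i)) \<le> (\<Sum>i<N. l i * real_of_ereal (W (s i)))"
    using convex_on_sum[OF _ N finite_part(2), of l s] l l1 fin by (auto intro: less_imp_le)
  with mem not_minf show ?thesis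
    by (cases "W (\<Sum>i<N. l i *\<^sub>R s i)") auto
qed

lemma prod_emexp_epowr_le_emexp_geometric_mean_vec:
  fixes V :: "real ^ 'n \<Rightarrow> ereal" and x :: "nat \<Rightarrow> real ^ 'n"
  assumes V_not_minf: "\<And>x. x \<in> pos_orthant \<Longrightarrow> V x \<noteq> -\<infinity>"
    and V_conv: "ereal_convex_on UNIV (\<lambda>t. V (\<chi> j. exp (t $ j)))"
    and l: "\<And>i. i < N \<Longrightarrow> 0 < l i" and l1: "(\<Sum>i<N. l i) = 1"
    and x: "\<And>i. i < N \<Longrightarrow> x i \<in> pos_orthant"
  shows "(\<Prod>i<N. emexp (V (x i)) epowr l i) \<le> emexp (V (geometric_mean_vec N l x))"
proof (cases "\<exists>i<N. V (x i) = \<infinity>")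
  case True
  then obtain k where "k < N" "V (x k) = \<infinity>"
    by auto
  then have "(\<Prod>i<N. emexp (V (x i)) epowr l i) = 0"
    by (intro prod_zero bexI[of _ k]) auto
  then show ?thesis
    by (simp only: zero_le)
next
  case False
  define W where "W t = V (\<chi> j. exp (t $ j))" for t :: "real ^ 'n"
  define s where "s i = (\<chi> j. ln (x i $ j))" for i
  define v where "v i = real_of_ereal (V (x i))" for i
  have W_not_minf: "W t \<noteq> -\<infinity>" for t
    unfolding W_def by (intro V_not_minf) (simp add: mem_pos_orthant)
  have W_s: "W (s i) = V (x i)" if "i < N" for i
    using x[OF that] by (simp add: W_def s_def mem_pos_orthant vec_eq_iff)
  have V_x: "V (x i) = ereal (v i)" if "i < N" for i
    using False that V_not_minf[OF x[OF that]] unfolding v_def by (cases "V (x i)") auto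
  have "(\<chi> j. exp ((\<Sum>i<N. l i *\<^sub>R s i) $ j)) = geometric_mean_vec N l x"
    using x by (simp add: vec_eq_iff s_def sum_component exp_sum powr_def mem_pos_orthant
        mult.commute less_imp_neq[symmetric])
  then have "V (geometric_mean_vec N l x) = W (\<Sum>i<N. l i *\<^sub>R s i)"
    by (simp add: W_def)
  also have "\<dots> \<le> ereal (\<Sum>i<N. l i * v i)"
    using ereal_convex_on_sum[of W N l s, OF _ W_not_minf l l1] V_conv False W_s
    by (simp add: W_def[symmetric] v_def)
  finally have "ennreal (exp (- (\<Sum>i<N. l i * v i))) \<le> emexp (V (geometric_mean_vec N l x))"
    using V_not_minf[OF geometric_mean_vec_pos_orthant[OF x]]
    by (cases "V (geometric_mean_vec N l x)") (auto intro: ennreal_leI)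
  moreover have "(\<Prod>i<N. emexp (V (x i)) epowr l i) = ennreal (exp (- (\<Sum>i<N. l i * v i)))"
    using V_x by (simp add: powr_def exp_sum[symmetric] sum_negf[symmetric] prod_ennreal mult.commute)
  ultimately show ?thesis
    by simp
qed

lemma borel_measurable_lebesgue_envelope:
  fixes u :: "'a::euclidean_space \<Rightarrow> ennreal"
  assumes "u \<in> borel_measurable lebesgue"
  obtains u\<^sub>0 u\<^sub>1 where "u\<^sub>0 \<in> borel_measurable borel" "u\<^sub>1 \<in> borel_measurable borel"
    "\<And>x. u\<^sub>0 x \<le> u x" "\<And>x. u x \<le> u\<^sub>1 x" "AE x in lborel. u\<^sub>0 x = u x" "AE x in lborel. u\<^sub>1 x = u x"
proof -
  obtain g where g: "g \<in> borel_measurable lborel" "AE x in lborel. u x = g x"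
    using completion_ex_borel_measurable[OF assms] by auto
  from g(2) obtain Z where "{x \<in> space lborel. u x \<noteq> g x} \<subseteq> Z" "emeasure lborel Z = 0" "Z \<in> sets lborel"
    by (rule AE_E)
  then have Z: "{x. u x \<noteq> g x} \<subseteq> Z" "Z \<in> null_sets lborel"
    by auto
  have [measurable]: "g \<in> borel_measurable borel" "Z \<in> sets borel"
    using g Z by auto
  have ug: "u x = g x" if "x \<notin> Z" for x
    using Z(1) that by auto
  have ae: "AE x in lborel. x \<notin> Z"
    using Z(2) by (rule AE_not_in)
  show ?thesis
  proof (rule that[of "\<lambda>x. if x \<in> Z then 0 else g x" "\<lambda>x. if x \<in> Z then \<infinity> else g x"])
    show "AE x in lborel. (if x \<in> Z then 0 else g x) = u x"
      using ae by eventually_elim (simp add: ug)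
    show "AE x in lborel. (if x \<in> Z then \<infinity> else g x) = u x"
      using ae by eventually_elim (simp add: ug)
  qed (auto simp: ug)
qed

lemma nn_integral_density_lebesgue_eq_lborel:
  fixes u w g :: "'a::euclidean_space \<Rightarrow> ennreal"
  assumes u: "u \<in> borel_measurable lebesgue" and u_outside: "\<And>x. x \<notin> P \<Longrightarrow> u x = 0"
    and [measurable]: "P \<in> sets borel" "w \<in> borel_measurable borel" "g \<in> borel_measurable borel"
    and w: "AE x in lborel. w x = u x"
  shows "(\<integral>\<^sup>+x. g x \<partial>density lebesgue u) = (\<integral>\<^sup>+x. indicator P x * g x * w x \<partial>lborel)"
proof -
  have "(\<integral>\<^sup>+x. g x \<partial>density lebesgue u) = (\<integral>\<^sup>+x. indicator P x * g x \<partial>density lebesgue u)"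
    using u_outside by (intro nn_integral_cong_AE) (auto simp: AE_density[OF u] indicator_def)
  also have "\<dots> = (\<integral>\<^sup>+x. u x * (indicator P x * g x) \<partial>lebesgue)"
    by (intro nn_integral_density u measurable_completion) measurable
  also have "\<dots> = (\<integral>\<^sup>+x. indicator P x * g x * w x \<partial>lebesgue)"
    using AE_completion[OF w] by (intro nn_integral_cong_AE) (auto simp: ac_simps)
  also have "\<dots> = (\<integral>\<^sup>+x. indicator P x * g x * w x \<partial>lborel)"
    by (rule nn_integral_completion)
  finally show ?thesis .
qed

lemma AE_meas_V_pos_orthant:
  assumes "(\<lambda>x. indicator pos_orthant x * emexp (V x)) \<in> borel_measurable lebesgue"
  shows "AE x in meas_V V. x \<in> pos_orthant"
  unfolding meas_V_def using assms by (subst AE_density) (auto simp: indicator_def intro!: AE_I2)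

text \<open>The density e^-V is only Lebesgue measurable. Its Borel minorant is used on the left and
  its Borel majorant on the right, which keeps the pointwise hypothesis valid.\<close>
theorem prekopa_leindler_multiplicative_meas_V:
  fixes V :: "real ^ 'n \<Rightarrow> ereal" and F :: "nat \<Rightarrow> real ^ 'n \<Rightarrow> ennreal" and H :: "real ^ 'n \<Rightarrow> ennreal"
  assumes l: "\<And>i. i < N \<Longrightarrow> 0 < l i" and l1: "(\<Sum>i<N. l i) = 1"
    and V_not_minf: "\<And>x. x \<in> pos_orthant \<Longrightarrow> V x \<noteq> -\<infinity>"
    and V_meas: "(\<lambda>x. indicator pos_orthant x * emexp (V x)) \<in> borel_measurable lebesgue"
    and V_conv: "ereal_convex_on UNIV (\<lambda>t. V (\<chi> j. exp (t $ j)))"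
    and F: "\<And>i. i < N \<Longrightarrow> F i \<in> borel_measurable borel"
    and H [measurable]: "H \<in> borel_measurable borel"
    and hyp: "\<And>x. (\<And>i. i < N \<Longrightarrow> x i \<in> pos_orthant) \<Longrightarrow>
      (\<Prod>i<N. F i (x i) epowr l i) \<le> H (geometric_mean_vec N l x)"
  shows "(\<Prod>i<N. (\<integral>\<^sup>+x. F i x \<partial>meas_V V) epowr l i) \<le> (\<integral>\<^sup>+x. H x \<partial>meas_V V)"
proof -
  let ?P = "pos_orthant :: (real ^ 'n) set"
  define u where "u x = indicator ?P x * emexp (V x)" for x
  have u: "u \<in> borel_measurable lebesgue"
    using V_meas by (simp add: u_def[abs_def])
  then obtain u\<^sub>0 u\<^sub>1 where u_meas: "u\<^sub>0 \<in> borel_measurable borel" "u\<^sub>1 \<in> borel_measurable borel"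
    and u\<^sub>0_le: "\<And>x. u\<^sub>0 x \<le> u x" and u\<^sub>1_ge: "\<And>x. u x \<le> u\<^sub>1 x"
    and u\<^sub>0_ae: "AE x in lborel. u\<^sub>0 x = u x" and u\<^sub>1_ae: "AE x in lborel. u\<^sub>1 x = u x"
    by (rule borel_measurable_lebesgue_envelope) blast
  note [measurable] = u_meas
  have "(\<Prod>i<N. (\<integral>\<^sup>+x. indicator ?P x * F i x * u\<^sub>0 x \<partial>lborel) epowr l i)
      \<le> (\<integral>\<^sup>+x. indicator ?P x * H x * u\<^sub>1 x \<partial>lborel)"
  proof (rule prekopa_leindler_multiplicative_vec[OF l l1])
    show "(\<lambda>x. indicator ?P x * F i x * u\<^sub>0 x) \<in> borel_measurable borel" if "i < N" for i
      using F[OF that] by measurable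
    fix x assume x: "\<And>i. i < N \<Longrightarrow> x i \<in> ?P"
    let ?z = "geometric_mean_vec N l x"
    have z: "?z \<in> ?P"
      using x by (rule geometric_mean_vec_pos_orthant)
    have u\<^sub>0_x: "u\<^sub>0 (x i) \<le> emexp (V (x i))" if "i < N" for i
      using u\<^sub>0_le[of "x i"] x[OF that] by (simp add: u_def)
    have "(\<Prod>i<N. (indicator ?P (x i) * F i (x i) * u\<^sub>0 (x i)) epowr l i)
        = (\<Prod>i<N. F i (x i) epowr l i) * (\<Prod>i<N. u\<^sub>0 (x i) epowr l i)"
      using x l by (simp add: epowr_mult prod.distrib)
    also have "\<dots> \<le> H ?z * emexp (V ?z)"
    proof (rule mult_mono)
      have "(\<Prod>i<N. u\<^sub>0 (x i) epowr l i) \<le> (\<Prod>i<N. emexp (V (x i)) epowr l i)"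
        using u\<^sub>0_x by (intro prod_epowr_mono) (auto intro: less_imp_le[OF l])
      also have "\<dots> \<le> emexp (V ?z)"
        using V_not_minf V_conv l l1 x by (rule prod_emexp_epowr_le_emexp_geometric_mean_vec)
      finally show "(\<Prod>i<N. u\<^sub>0 (x i) epowr l i) \<le> emexp (V ?z)" .
    qed (use x in \<open>auto intro: hyp\<close>)
    also have "\<dots> \<le> indicator ?P ?z * H ?z * u\<^sub>1 ?z"
      using u\<^sub>1_ge[of ?z] z by (simp add: u_def mult_left_mono)
    finally show "(\<Prod>i<N. (indicator ?P (x i) * F i (x i) * u\<^sub>0 (x i)) epowr l i)
        \<le> indicator ?P ?z * H ?z * u\<^sub>1 ?z" .
  qed (auto simp: indicator_def)
  moreover have m: "meas_V V = density lebesgue u"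
    by (simp add: meas_V_def u_def[abs_def])
  moreover have "(\<integral>\<^sup>+x. F i x \<partial>meas_V V) = (\<integral>\<^sup>+x. indicator ?P x * F i x * u\<^sub>0 x \<partial>lborel)"
    if "i < N" for i
    unfolding m using u u\<^sub>0_ae F[OF that] by (intro nn_integral_density_lebesgue_eq_lborel) (auto simp: u_def)
  moreover have "(\<integral>\<^sup>+x. H x \<partial>meas_V V) = (\<integral>\<^sup>+x. indicator ?P x * H x * u\<^sub>1 x \<partial>lborel)"
    unfolding m using u u\<^sub>1_ae by (intro nn_integral_density_lebesgue_eq_lborel) (auto simp: u_def)
  ultimately show ?thesis
    by simp
qed

section \<open>The cost inequality\<close>

lemma cost_eq_sum_geometric_mean_vec_powr:
  assumes "0 < A" "\<And>i. i < N \<Longrightarrow> l i = (1 / \<alpha> i) / A"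
  shows "cost N \<alpha> x = (\<Sum>j\<in>UNIV. geometric_mean_vec N l x $ j powr A)"
  unfolding cost_def using assms by (simp add: prod_powr_distrib powr_powr)

lemma prod_epowr_le_cost_bound:
  fixes f :: "nat \<Rightarrow> real ^ 'n \<Rightarrow> real" and x :: "nat \<Rightarrow> real ^ 'n"
  assumes A: "0 < A" and l: "\<And>i. i < N \<Longrightarrow> l i = (1 / \<alpha> i) / A"
    and f: "\<And>i. i < N \<Longrightarrow> 0 \<le> f i (x i)"
    and hyp: "(\<Prod>i<N. f i (x i) powr (1 / \<alpha> i)) \<le> \<rho> (cost N \<alpha> x)"
  shows "(\<Prod>i<N. ennreal (f i (x i)) epowr l i)
    \<le> ennreal (\<rho> (\<Sum>j\<in>UNIV. geometric_mean_vec N l x $ j powr A) powr (1 / A))"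
proof -
  have "(\<Prod>i<N. f i (x i) powr l i) = (\<Prod>i<N. f i (x i) powr (1 / \<alpha> i)) powr (1 / A)"
    using l by (simp add: prod_powr_distrib powr_powr)
  also have "\<dots> \<le> \<rho> (cost N \<alpha> x) powr (1 / A)"
    using hyp A by (simp add: powr_mono2 prod_nonneg)
  also have "\<dots> = \<rho> (\<Sum>j\<in>UNIV. geometric_mean_vec N l x $ j powr A) powr (1 / A)"
    using cost_eq_sum_geometric_mean_vec_powr[of A N l \<alpha> x] A l by simp
  finally show ?thesis
    using f by (simp add: prod_ennreal ennreal_leI)
qed

lemma sum_powr_pos_orthant: "x \<in> pos_orthant \<Longrightarrow> 0 < (\<Sum>j\<in>UNIV. x $ j powr A)"
  by (intro sum_pos) (auto simp: mem_pos_orthant less_imp_neq[symmetric])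

lemma borel_measurable_extend_restrict_space:
  fixes f :: "'a::topological_space \<Rightarrow> 'b::{zero, topological_space}"
  assumes "f \<in> borel_measurable (restrict_space borel S)" "S \<in> sets borel"
  shows "(\<lambda>x. if x \<in> S then f x else 0) \<in> borel_measurable borel"
  using assms by (subst (asm) measurable_restrict_space_iff) auto

theorem cost_prekopa_leindler:
  fixes V :: "real ^ 'n \<Rightarrow> ereal" and f :: "nat \<Rightarrow> real ^ 'n \<Rightarrow> real" and \<rho> :: "real \<Rightarrow> real"
  assumes N: "N \<ge> 1" and \<alpha>: "\<And>i. i < N \<Longrightarrow> 0 < \<alpha> i"
    and V_not_minf: "\<And>x. x \<in> pos_orthant \<Longrightarrow> V x \<noteq> -\<infinity>"
    and V_meas: "(\<lambda>x. indicator pos_orthant x * emexp (V x)) \<in> borel_measurable lebesgue"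
    and V_conv: "ereal_convex_on UNIV (\<lambda>t. V (\<chi> j. exp (t $ j)))"
    and f_meas: "\<And>i. i < N \<Longrightarrow> f i \<in> borel_measurable (restrict_space borel pos_orthant)"
    and f_nonneg: "\<And>i x. i < N \<Longrightarrow> x \<in> pos_orthant \<Longrightarrow> 0 \<le> f i x"
    and \<rho>_meas: "\<rho> \<in> borel_measurable (restrict_space borel {0<..})"
    and hyp: "\<And>x. (\<And>i. i < N \<Longrightarrow> x i \<in> pos_orthant) \<Longrightarrow>
      (\<Prod>i<N. f i (x i) powr (1 / \<alpha> i)) \<le> \<rho> (cost N \<alpha> x)"
  defines "A \<equiv> \<Sum>i<N. 1 / \<alpha> i"
  shows "(\<Prod>i<N. (\<integral>\<^sup>+x. ennreal (f i x) \<partial>meas_V V) epowr (1 / \<alpha> i))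
    \<le> (\<integral>\<^sup>+t. ennreal (\<rho> (\<Sum>j\<in>UNIV. (t $ j) powr A) powr (1 / A)) \<partial>meas_V V) epowr A"
proof -
  let ?P = "pos_orthant :: (real ^ 'n) set"
  have A: "0 < A"
    unfolding A_def using N \<alpha> by (intro sum_pos) (auto simp: lessThan_empty_iff)
  define l where "l i = (1 / \<alpha> i) / A" for i
  have l: "0 < l i" if "i < N" for i
    using \<alpha>[OF that] A by (simp add: l_def)
  have "(\<Sum>i<N. l i) = (\<Sum>i<N. 1 / \<alpha> i) / A"
    unfolding l_def by (rule sum_divide_distrib[symmetric])
  with A have l1: "(\<Sum>i<N. l i) = 1"
    by (simp add: A_def)
  define f' where "f' i x = (if x \<in> ?P then f i x else 0)" for i x
  have f'_meas: "f' i \<in> borel_measurable borel" if "i < N" for i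
    unfolding f'_def using f_meas[OF that] by (rule borel_measurable_extend_restrict_space) simp
  define \<rho>' where "\<rho>' s = (if s \<in> {0<..} then \<rho> s else 0)" for s
  have [measurable]: "\<rho>' \<in> borel_measurable borel"
    unfolding \<rho>'_def using \<rho>_meas by (rule borel_measurable_extend_restrict_space) simp
  define r :: "real ^ 'n \<Rightarrow> ennreal" where "r t = ennreal (\<rho>' (\<Sum>j\<in>UNIV. (t $ j) powr A) powr (1 / A))" for t
  have r: "r t = ennreal (\<rho> (\<Sum>j\<in>UNIV. (t $ j) powr A) powr (1 / A))" if "t \<in> ?P" for t
    using sum_powr_pos_orthant[OF that] by (simp add: r_def \<rho>'_def)
  have "(\<Prod>i<N. (\<integral>\<^sup>+x. ennreal (f' i x) \<partial>meas_V V) epowr l i) \<le> (\<integral>\<^sup>+x. r x \<partial>meas_V V)"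
  proof (rule prekopa_leindler_multiplicative_meas_V[OF l l1 V_not_minf V_meas V_conv])
    show "(\<lambda>x. ennreal (f' i x)) \<in> borel_measurable borel" if "i < N" for i
      using f'_meas[OF that] by measurable
    show "r \<in> borel_measurable borel"
      unfolding r_def by measurable
    fix x assume x: "\<And>i. i < N \<Longrightarrow> x i \<in> ?P"
    have z: "geometric_mean_vec N l x \<in> ?P"
      using x by (rule geometric_mean_vec_pos_orthant)
    show "(\<Prod>i<N. ennreal (f' i (x i)) epowr l i) \<le> r (geometric_mean_vec N l x)"
    proof (unfold r[OF z], rule prod_epowr_le_cost_bound[OF A])
      show "(\<Prod>i<N. f' i (x i) powr (1 / \<alpha> i)) \<le> \<rho> (cost N \<alpha> x)"
        using x hyp[of x] by (simp add: f'_def)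
    qed (use f_nonneg x in \<open>simp_all add: l_def f'_def\<close>)
  qed
  moreover have "(\<integral>\<^sup>+x. ennreal (f i x) \<partial>meas_V V) = (\<integral>\<^sup>+x. ennreal (f' i x) \<partial>meas_V V)" for i
    using AE_meas_V_pos_orthant[OF V_meas] by (intro nn_integral_cong_AE) (auto simp: f'_def)
  moreover have "(\<integral>\<^sup>+t. ennreal (\<rho> (\<Sum>j\<in>UNIV. (t $ j) powr A) powr (1 / A)) \<partial>meas_V V)
      = (\<integral>\<^sup>+x. r x \<partial>meas_V V)"
    using AE_meas_V_pos_orthant[OF V_meas] by (intro nn_integral_cong_AE) (auto simp: r)
  ultimately have "(\<Prod>i<N. (\<integral>\<^sup>+x. ennreal (f i x) \<partial>meas_V V) epowr l i) epowr A
      \<le> (\<integral>\<^sup>+t. ennreal (\<rho> (\<Sum>j\<in>UNIV. (t $ j) powr A) powr (1 / A)) \<partial>meas_V V) epowr A"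
    using A by (intro epowr_mono) auto
  moreover have "(\<Prod>i<N. (\<integral>\<^sup>+x. ennreal (f i x) \<partial>meas_V V) epowr l i) epowr A
      = (\<Prod>i<N. (\<integral>\<^sup>+x. ennreal (f i x) \<partial>meas_V V) epowr (1 / \<alpha> i))"
    using A l by (simp add: prod_epowr_distrib epowr_epowr l_def)
  ultimately show ?thesis
    by simp
qed

lemma prod_emexp_powr_le_exp_cost:
  fixes W :: "nat \<Rightarrow> real ^ 'n \<Rightarrow> ereal" and x :: "nat \<Rightarrow> real ^ 'n"
  assumes \<alpha>: "\<And>i. i < N \<Longrightarrow> 0 < \<alpha> i" and W_not_minf: "\<And>i. i < N \<Longrightarrow> W i (x i) \<noteq> -\<infinity>"
    and hyp: "ereal (cost N \<alpha> x) \<le> (\<Sum>i<N. W i (x i))"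
  shows "(\<Prod>i<N. enn2real (emexp (ereal (\<alpha> i) * W i (x i))) powr (1 / \<alpha> i)) \<le> exp (- cost N \<alpha> x)"
proof (cases "\<exists>i<N. W i (x i) = \<infinity>")
  case True
  then obtain k where k: "k < N" "W k (x k) = \<infinity>"
    by auto
  with \<alpha>[OF k(1)] have "(\<Prod>i<N. enn2real (emexp (ereal (\<alpha> i) * W i (x i))) powr (1 / \<alpha> i)) = 0"
    by (intro prod_zero bexI[of _ k]) auto
  then show ?thesis
    by (simp del: prod_zero_iff)
next
  case False
  define w where "w i = real_of_ereal (W i (x i))" for i
  have W: "W i (x i) = ereal (w i)" if "i < N" for i
    using False W_not_minf[OF that] that unfolding w_def by (cases "W i (x i)") auto
  have "(\<Prod>i<N. enn2real (emexp (ereal (\<alpha> i) * W i (x i))) powr (1 / \<alpha> i)) = (\<Prod>i<N. exp (- w i))"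
    using \<alpha> by (intro prod.cong refl) (simp add: W powr_def less_imp_neq[symmetric])
  also have "\<dots> = exp (- (\<Sum>i<N. w i))"
    by (simp add: exp_sum[symmetric] sum_negf)
  also have "\<dots> \<le> exp (- cost N \<alpha> x)"
    using hyp by (simp add: W)
  finally show ?thesis .
qed

corollary cost_prekopa_leindler_exp:
  fixes V :: "real ^ 'n \<Rightarrow> ereal" and W :: "nat \<Rightarrow> real ^ 'n \<Rightarrow> ereal"
  assumes N: "N \<ge> 1" and \<alpha>: "\<And>i. i < N \<Longrightarrow> 0 < \<alpha> i"
    and V_not_minf: "\<And>x. x \<in> pos_orthant \<Longrightarrow> V x \<noteq> -\<infinity>"
    and V_meas: "(\<lambda>x. indicator pos_orthant x * emexp (V x)) \<in> borel_measurable lebesgue"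
    and V_conv: "ereal_convex_on UNIV (\<lambda>t. V (\<chi> j. exp (t $ j)))"
    and W_meas: "\<And>i. i < N \<Longrightarrow> W i \<in> borel_measurable (restrict_space borel pos_orthant)"
    and W_not_minf: "\<And>i x. i < N \<Longrightarrow> x \<in> pos_orthant \<Longrightarrow> W i x \<noteq> -\<infinity>"
    and hyp: "\<And>x. (\<And>i. i < N \<Longrightarrow> x i \<in> pos_orthant) \<Longrightarrow> ereal (cost N \<alpha> x) \<le> (\<Sum>i<N. W i (x i))"
  defines "A \<equiv> \<Sum>i<N. 1 / \<alpha> i"
  shows "(\<Prod>i<N. (\<integral>\<^sup>+x. emexp (ereal (\<alpha> i) * W i x) \<partial>meas_V V) epowr (1 / \<alpha> i))
    \<le> (\<integral>\<^sup>+t. ennreal (exp (- (1 / A) * (\<Sum>j\<in>UNIV. (t $ j) powr A))) \<partial>meas_V V) epowr A"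
proof -
  define f where "f i x = enn2real (emexp (ereal (\<alpha> i) * W i x))" for i x
  have "(\<Prod>i<N. (\<integral>\<^sup>+x. ennreal (f i x) \<partial>meas_V V) epowr (1 / \<alpha> i))
      \<le> (\<integral>\<^sup>+t. ennreal (exp (- (\<Sum>j\<in>UNIV. (t $ j) powr A)) powr (1 / A)) \<partial>meas_V V) epowr A"
    unfolding A_def
  proof (rule cost_prekopa_leindler[OF N \<alpha> V_not_minf V_meas V_conv])
    show "f i \<in> borel_measurable (restrict_space borel pos_orthant)" if "i < N" for i
      using W_meas[OF that] unfolding f_def by measurable
    show "(\<lambda>s::real. exp (- s)) \<in> borel_measurable (restrict_space borel {0<..})"
      by (intro measurable_restrict_space1) measurable
    show "0 \<le> f i x" for i x
      by (simp add: f_def)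
    show "(\<Prod>i<N. f i (x i) powr (1 / \<alpha> i)) \<le> exp (- cost N \<alpha> x)"
      if x: "\<And>i. i < N \<Longrightarrow> x i \<in> pos_orthant" for x
    proof -
      have "W i (x i) \<noteq> -\<infinity>" if "i < N" for i
        using W_not_minf[OF that x[OF that]] .
      moreover have "ereal (cost N \<alpha> x) \<le> (\<Sum>i<N. W i (x i))"
        using x by (rule hyp)
      ultimately show ?thesis
        unfolding f_def using prod_emexp_powr_le_exp_cost[of N \<alpha> W x, OF \<alpha>] by blast
    qed
  qed
  moreover have "emexp (ereal (\<alpha> i) * W i x) = ennreal (f i x)" if "i < N" "x \<in> pos_orthant" for i x
    using W_not_minf[OF that] \<alpha>[OF that(1)] by (cases "W i x") (auto simp: f_def emexp_def)
  then have "(\<integral>\<^sup>+x. emexp (ereal (\<alpha> i) * W i x) \<partial>meas_V V) = (\<integral>\<^sup>+x. ennreal (f i x) \<partial>meas_V V)"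
    if "i < N" for i
    using AE_meas_V_pos_orthant[OF V_meas] that by (intro nn_integral_cong_AE) auto
  moreover have "exp (- s) powr (1 / A) = exp (- (1 / A) * s)" for s
    by (simp add: powr_def)
  ultimately show ?thesis
    by simp
qed

theorem proposition6p1:
  fixes N :: nat and \<alpha> :: "nat \<Rightarrow> real" and V :: "real ^ 'n \<Rightarrow> ereal"
  assumes N_pos: "N \<ge> 1"
    and \<alpha>_pos: "\<forall>i<N. 0 < \<alpha> i"
    and V_not_minf: "\<forall>x\<in>pos_orthant. V x \<noteq> -\<infinity>"
    and V_meas: "(\<lambda>x. indicator pos_orthant x * emexp (V x)) \<in> borel_measurable lebesgue"
    and V_conv: "ereal_convex_on UNIV (\<lambda>t. V (\<chi> j. exp (t $ j)))"
  defines "A \<equiv> (\<Sum>i<N. 1 / \<alpha> i)"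
    and "m \<equiv> meas_V V"
  shows
    "(\<forall>(f :: nat \<Rightarrow> real ^ 'n \<Rightarrow> real) (\<rho> :: real \<Rightarrow> real).
        (\<forall>i<N. f i \<in> borel_measurable (restrict_space borel pos_orthant)
               \<and> (\<forall>x\<in>pos_orthant. 0 \<le> f i x)) \<and>
        \<rho> \<in> borel_measurable (restrict_space borel {0<..}) \<and>
        (\<forall>s>0. 0 \<le> \<rho> s) \<and>
        (\<forall>x. (\<forall>i<N. x i \<in> pos_orthant) \<longrightarrow>
              (\<Prod>i<N. f i (x i) powr (1 / \<alpha> i)) \<le> \<rho> (cost N \<alpha> x))
      \<longrightarrow>
        (\<Prod>i<N. (\<integral>\<^sup>+ x. ennreal (f i x) \<partial>m) epowr (1 / \<alpha> i))
          \<le> (\<integral>\<^sup>+ t. ennreal (\<rho> (\<Sum>j\<in>UNIV. (t $ j) powr A) powr (1 / A)) \<partial>m) epowr A)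
     \<and>
     (\<forall>W :: nat \<Rightarrow> real ^ 'n \<Rightarrow> ereal.
        (\<forall>i<N. W i \<in> borel_measurable (restrict_space borel pos_orthant)
               \<and> (\<forall>x\<in>pos_orthant. W i x \<noteq> -\<infinity>)) \<and>
        (\<forall>x. (\<forall>i<N. x i \<in> pos_orthant) \<longrightarrow>
              (\<Sum>i<N. W i (x i)) \<ge> ereal (cost N \<alpha> x))
      \<longrightarrow>
        (\<Prod>i<N. (\<integral>\<^sup>+ x. emexp (ereal (\<alpha> i) * W i x) \<partial>m) epowr (1 / \<alpha> i))
          \<le> (\<integral>\<^sup>+ t. ennreal (exp (- (1 / A) * (\<Sum>j\<in>UNIV. (t $ j) powr A))) \<partial>m) epowr A)"
  unfolding A_def m_def using N_pos \<alpha>_pos V_not_minf V_meas V_conv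
  by (intro conjI allI impI; elim conjE; intro cost_prekopa_leindler cost_prekopa_leindler_exp; auto)

end
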